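(* Let $T:I\to I$ be an interval exchange map with the Keane property, on an alphabet $\mathcal A$ with $d$ letters, and let $i^+,i^-$ and $K$ be as defined in the context. Then there is a unique continuous map $\hat T:K\to K$ such that $\hat T\circ i^+=i^+\circ T$ on $I$. Moreover, $\hat T$ is a minimal homeomorphism of $K$.
   Context: Combinatorial data: bijections $\pi_0,\pi_1:\mathcal A\to\{1,\dots,d\}$, admissible ($\pi_0^{-1}(\{1,\dots,k\})\neq\pi_1^{-1}(\{1,\dots,k\})$ for $1\le k<d$); lengths $\lambda\in(0,\infty)^{\mathcal A}$, $\lambda^*=\sum\lambda_\alpha$, $I=[0,\lambda^* )$, $I_\alpha=[0,\lambda_\alpha)\times\{\alpha\}$, $j_\varepsilon(x,\alpha)=x+\sum_{\pi_\varepsilon(\beta)<\pi_\varepsilon(\alpha)}\lambda_\beta$, $T=j_1\circ j_0^{-1}$. Keane property: no $(\alpha,\beta,m)$ with $\pi_0(\beta)>1$, $m\ge1$, $T^m(j_0(0,\alpha))=j_0(0,\beta)$. For $n\ge0$ let $D_0(n)=\{T^{-n}(j_0(0,\alpha)):\alpha\in\mathcal A,\ \pi_0(\alpha)>1\}$ and $D_1(n)=\{T^{n}(j_1(0,\alpha)):\alpha\in\mathcal A,\ \pi_1(\alpha)>1\}$ (under the Keane property these sets are pairwise disjoint and do not contain $0$). Let $\mu=\sum_{n\ge0}\sum_{y\in D_0(n)\sqcup D_1(n)}2^{-n}\delta_y$, and for $y\in I$ put $i^-(y)=y+\mu([0,y))$, $i^+(y)=y+\mu([0,y])$; also $i^-(\lambda^*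 )=\lambda^*+4(d-1)$. Let $K=i^-(I)\cup i^+(I)\cup\{i^-(\lambda^* )\}\subset\mathbb R$. *)

theory Defs
  imports "HOL-Analysis.Analysis"
begin

definition ie_data :: "'a set \<Rightarrow> ('a \<Rightarrow> nat) \<Rightarrow> ('a \<Rightarrow> nat) \<Rightarrow> ('a \<Rightarrow> real) \<Rightarrow> bool" where
  "ie_data A p0 p1 lam \<longleftrightarrow> finite A \<and> bij_betw p0 A {1..card A} \<and> bij_betw p1 A {1..card A}
      \<and> (\<forall>a\<in>A. lam a > 0)"

definition admissible :: "'a set \<Rightarrow> ('a \<Rightarrow> nat) \<Rightarrow> ('a \<Rightarrow> nat) \<Rightarrow> bool" where
  "admissible A p0 p1 \<longleftrightarrow>
     (\<forall>k. 1 \<le> k \<and> k < card A \<longrightarrow> {a\<in>A. p0 a \<in> {1..k}} \<noteq> {a\<in>A. p1 a \<in> {1..k}})"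

definition lstar :: "'a set \<Rightarrow> ('a \<Rightarrow> real) \<Rightarrow> real" where
  "lstar A lam = (\<Sum>a\<in>A. lam a)"

definition Iint :: "'a set \<Rightarrow> ('a \<Rightarrow> real) \<Rightarrow> real set" where
  "Iint A lam = {0..<lstar A lam}"

definition offs :: "'a set \<Rightarrow> ('a \<Rightarrow> nat) \<Rightarrow> ('a \<Rightarrow> real) \<Rightarrow> 'a \<Rightarrow> real" where
  "offs A p lam a = (\<Sum>b\<in>{b\<in>A. p b < p a}. lam b)"

definition jmap :: "'a set \<Rightarrow> ('a \<Rightarrow> nat) \<Rightarrow> ('a \<Rightarrow> real) \<Rightarrow> real \<times> 'a \<Rightarrow> real" where
  "jmap A p lam = (\<lambda>(x, a). x + offs A p lam a)"

definition Idisj :: "'a set \<Rightarrow> ('a \<Rightarrow> real) \<Rightarrow> (real \<times> 'a) set" where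
  "Idisj A lam = (\<Union>a\<in>A. {0..<lam a} \<times> {a})"

definition iet :: "'a set \<Rightarrow> ('a \<Rightarrow> nat) \<Rightarrow> ('a \<Rightarrow> nat) \<Rightarrow> ('a \<Rightarrow> real) \<Rightarrow> real \<Rightarrow> real" where
  "iet A p0 p1 lam = jmap A p1 lam \<circ> inv_into (Idisj A lam) (jmap A p0 lam)"

definition keane :: "'a set \<Rightarrow> ('a \<Rightarrow> nat) \<Rightarrow> ('a \<Rightarrow> nat) \<Rightarrow> ('a \<Rightarrow> real) \<Rightarrow> bool" where
  "keane A p0 p1 lam \<longleftrightarrow>
     \<not> (\<exists>a\<in>A. \<exists>b\<in>A. \<exists>m::nat. p0 b > 1 \<and> m \<ge> 1 \<and>
          (iet A p0 p1 lam ^^ m) (jmap A p0 lam (0, a)) = jmap A p0 lam (0, b))"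

definition D0 :: "'a set \<Rightarrow> ('a \<Rightarrow> nat) \<Rightarrow> ('a \<Rightarrow> nat) \<Rightarrow> ('a \<Rightarrow> real) \<Rightarrow> nat \<Rightarrow> real set" where
  "D0 A p0 p1 lam n = {(inv_into (Iint A lam) (iet A p0 p1 lam) ^^ n) (jmap A p0 lam (0, a)) | a. a \<in> A \<and> p0 a > 1}"

definition D1 :: "'a set \<Rightarrow> ('a \<Rightarrow> nat) \<Rightarrow> ('a \<Rightarrow> nat) \<Rightarrow> ('a \<Rightarrow> real) \<Rightarrow> nat \<Rightarrow> real set" where
  "D1 A p0 p1 lam n = {(iet A p0 p1 lam ^^ n) (jmap A p1 lam (0, a)) | a. a \<in> A \<and> p1 a > 1}"

definition muS :: "'a set \<Rightarrow> ('a \<Rightarrow> nat) \<Rightarrow> ('a \<Rightarrow> nat) \<Rightarrow> ('a \<Rightarrow> real) \<Rightarrow> real set \<Rightarrow> real" where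
  "muS A p0 p1 lam S = (\<Sum>n. (1/2)^n * (real (card (D0 A p0 p1 lam n \<inter> S)) + real (card (D1 A p0 p1 lam n \<inter> S))))"

definition iminus :: "'a set \<Rightarrow> ('a \<Rightarrow> nat) \<Rightarrow> ('a \<Rightarrow> nat) \<Rightarrow> ('a \<Rightarrow> real) \<Rightarrow> real \<Rightarrow> real" where
  "iminus A p0 p1 lam y =
     (if y = lstar A lam then lstar A lam + 4 * (real (card A) - 1)
      else y + muS A p0 p1 lam {0..<y})"

definition iplus :: "'a set \<Rightarrow> ('a \<Rightarrow> nat) \<Rightarrow> ('a \<Rightarrow> nat) \<Rightarrow> ('a \<Rightarrow> real) \<Rightarrow> real \<Rightarrow> real" where
  "iplus A p0 p1 lam y = y + muS A p0 p1 lam {0..y}"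

definition Kset :: "'a set \<Rightarrow> ('a \<Rightarrow> nat) \<Rightarrow> ('a \<Rightarrow> nat) \<Rightarrow> ('a \<Rightarrow> real) \<Rightarrow> real set" where
  "Kset A p0 p1 lam = iminus A p0 p1 lam ` Iint A lam \<union> iplus A p0 p1 lam ` Iint A lam
      \<union> {iminus A p0 p1 lam (lstar A lam)}"

definition minimal_on :: "real set \<Rightarrow> (real \<Rightarrow> real) \<Rightarrow> bool" where
  "minimal_on K f \<longleftrightarrow> (\<forall>C. C \<subseteq> K \<and> closedin (top_of_set K) C \<and> C \<noteq> {} \<and> f ` C \<subseteq> C \<longrightarrow> C = K)"

end

theory Submission
  imports Defs
begin

text \<open>
  Up to the added end point i^-(L), K is [0, L) with every point y of the countable set D
  of orbits of discontinuities doubled into i^-(y) < i^+(y), separated by a gap of length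
  mu {y}. On each interval of the top partition T is a translation; the extension acts on
  the points i^+(y) through T and on the points i^-(y) through the left-continuous version
  of T. Away from 0 the set D is invariant under T, so gaps of K are carried to gaps and the
  extension is continuous; the extension of the inverse exchange is its inverse, and it is
  unique because i^+[0, L) is dense in K.

  Minimality reduces to Keane's theorem that every T-orbit is dense. The points whose orbit
  meets [p, q) form a finite union of half-open intervals (cut out by the first return times
  to [p, q)) that is invariant under T and its inverse, and so is its complement. A left end
  point of such a set must run into a discontinuity both forwards and backwards, which the
  Keane property allows only for 0; as 0 lies in only one of the two sets, the complement
  is empty.
\<close>

lemma separated_points_bound:
  fixes u :: "nat \<Rightarrow> real" and l L :: real and N :: nat
  assumes "l > 0" and range: "\<And>i. i \<le> N \<Longrightarrow> 0 \<le> u i \<and> u i < L"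
    and sep: "\<And>i j. i \<le> N \<Longrightarrow> j \<le> N \<Longrightarrow> i \<noteq> j \<Longrightarrow> l \<le> \<bar>u i - u j\<bar>"
  shows "real N \<le> L / l"
proof -
  define f where "f i = nat \<lfloor>u i / l\<rfloor>" for i
  have "inj_on f {..N}"
  proof (rule inj_onI)
    fix i j assume ij: "i \<in> {..N}" "j \<in> {..N}" "f i = f j"
    have "0 \<le> u i / l" "0 \<le> u j / l" using range ij \<open>l > 0\<close> by auto
    then have "\<lfloor>u i / l\<rfloor> = \<lfloor>u j / l\<rfloor>" using ij(3) unfolding f_def by (simp add: eq_nat_nat_iff)
    then have "\<bar>u i / l - u j / l\<bar> < 1" by linarith
    then have "\<bar>u i - u j\<bar> < l" using \<open>l > 0\<close> by (simp add: diff_divide_distrib[symmetric] divide_less_eq)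
    then show "i = j" using sep ij by force
  qed
  moreover have "f ` {..N} \<subseteq> {..nat \<lfloor>L / l\<rfloor>}"
  proof
    fix y assume "y \<in> f ` {..N}"
    then obtain i where i: "i \<le> N" "y = f i" by auto
    have "u i / l \<le> L / l" using range i \<open>l > 0\<close> by (simp add: divide_right_mono less_imp_le)
    then show "y \<in> {..nat \<lfloor>L / l\<rfloor>}" using i unfolding f_def by (simp add: floor_mono nat_mono)
  qed
  ultimately have "N \<le> nat \<lfloor>L / l\<rfloor>"
    using card_inj_on_le[of f "{..N}" "{..nat \<lfloor>L / l\<rfloor>}"] by simp
  moreover have "0 \<le> L / l" using range[of 0] \<open>l > 0\<close> by simp
  ultimately show ?thesis by (simp add: le_nat_iff le_floor_iff)
qed

lemma finite_orbit_repeats: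
  assumes "finite F" "\<And>m. (G^^m) s \<in> F"
  obtains i j where "i < j" "(G^^i) s = (G^^j) s"
proof -
  have "\<not> inj_on (\<lambda>m. (G^^m) s) {..card F}"
  proof
    assume "inj_on (\<lambda>m. (G^^m) s) {..card F}"
    then have "card {..card F} \<le> card F"
      using assms by (intro card_inj_on_le) auto
    then show False by simp
  qed
  then obtain i j where "(G^^i) s = (G^^j) s" "i \<noteq> j" unfolding inj_on_def by blast
  then show ?thesis using that by (metis linorder_neqE_nat)
qed

definition left_ends :: "real set \<Rightarrow> real set" where
  "left_ends Z = {s\<in>Z. \<exists>\<delta>>0. {s - \<delta><..<s} \<inter> Z = {}}"

lemma left_ends_Union_subset:
  assumes "Z = (\<Union>(a,b)\<in>P. {a..<b})"
  shows "left_ends Z \<subseteq> fst ` P"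
proof
  fix s assume s: "s \<in> left_ends Z"
  then obtain \<delta> where d: "\<delta> > 0" "{s - \<delta><..<s} \<inter> Z = {}" unfolding left_ends_def by auto
  have "s \<in> Z" using s unfolding left_ends_def by auto
  then obtain a b where ab: "(a,b) \<in> P" "a \<le> s" "s < b" using assms by auto
  have "a = s"
  proof (rule ccontr)
    assume "a \<noteq> s"
    then have "max a (s - \<delta>/2) \<in> {a..<b}" "max a (s - \<delta>/2) \<in> {s - \<delta><..<s}" using ab d by auto
    then have "max a (s - \<delta>/2) \<in> {s - \<delta><..<s} \<inter> Z" using assms ab(1) by blast
    then show False using d by blast
  qed
  then show "s \<in> fst ` P" using ab by force
qed

lemma left_ends_Diff_Union_subset:
  assumes "finite P" "Y = (\<Union>(a,b)\<in>P. {a..<b})"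
  shows "left_ends ({0..<L} - Y) \<subseteq> insert 0 (snd ` P)"
proof
  fix s assume s: "s \<in> left_ends ({0..<L} - Y)"
  then obtain \<delta> where d: "\<delta> > 0" "{s - \<delta><..<s} \<inter> ({0..<L} - Y) = {}"
    unfolding left_ends_def by auto
  have sI: "s \<in> {0..<L}" "s \<notin> Y" using s unfolding left_ends_def by auto
  show "s \<in> insert 0 (snd ` P)"
  proof (rule ccontr)
    assume nb: "s \<notin> insert 0 (snd ` P)"
    then have "s > 0" using sI by auto
    \<comment> \<open>the largest endpoint below s leaves a gap just below s that Y must fill\<close>
    define M where "M = insert (max 0 (s - \<delta>)) ({b. \<exists>a. (a,b)\<in>P \<and> b < s} \<union> {a. \<exists>b. (a,b)\<in>P \<and> a < s})"
    have "finite {b. \<exists>a. (a,b)\<in>P \<and> b < s}"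
      by (rule finite_subset[OF _ finite_imageI[OF assms(1), of snd]]) force
    moreover have "finite {a. \<exists>b. (a,b)\<in>P \<and> a < s}"
      by (rule finite_subset[OF _ finite_imageI[OF assms(1), of fst]]) force
    ultimately have fM: "finite M" unfolding M_def by simp
    define m where "m = Max M"
    have mM: "m \<in> M" unfolding m_def using fM M_def by (intro Max_in) auto
    have ms: "m < s" using mM \<open>s > 0\<close> d unfolding M_def by auto
    have mge: "\<And>y. y \<in> M \<Longrightarrow> y \<le> m" unfolding m_def using fM by auto
    let ?x = "(m + s) / 2"
    have "max 0 (s - \<delta>) \<le> m" using mge unfolding M_def by blast
    then have "0 \<le> m" "s - \<delta> \<le> m" by auto
    then have x: "?x \<in> {s - \<delta><..<s}" "?x \<in> {0..<L}" using ms sI by auto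
    then have "?x \<notin> {0..<L} - Y" using d by (metis IntI empty_iff)
    then have "?x \<in> Y" using x by simp
    then obtain a b where ab: "(a,b) \<in> P" "a \<le> ?x" "?x < b" using assms(2) by auto
    have "a < s" using ab ms by auto
    moreover have "\<not> b < s"
    proof
      assume "b < s" then have "b \<in> M" unfolding M_def using ab by auto
      then show False using mge ab ms by fastforce
    qed
    moreover have "b \<noteq> s" using nb ab by force
    ultimately have "s \<in> {a..<b}" by auto
    then show False using sI assms(2) ab(1) by blast
  qed
qed

lemma left_ends_Union_nonempty:
  assumes "finite P" "P \<noteq> {}" "Z = (\<Union>(a,b)\<in>P. {a..<b})" "\<And>a b. (a,b)\<in>P \<Longrightarrow> a < b"
  shows "left_ends Z \<noteq> {}"
proof -
  define m where "m = Min (fst ` P)"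
  have "m \<in> fst ` P" unfolding m_def using assms by (intro Min_in) auto
  then obtain b where "(m,b) \<in> P" by force
  then have "m \<in> Z" using assms by force
  moreover have "{m - 1<..<m} \<inter> Z = {}"
  proof (rule ccontr)
    assume "{m - 1<..<m} \<inter> Z \<noteq> {}"
    then obtain x a b' where "x < m" "(a,b') \<in> P" "a \<le> x" using assms(3) by auto
    moreover have "m \<le> a" unfolding m_def using assms(1) \<open>(a,b') \<in> P\<close>
      by (metis Min_le finite_imageI fst_conv image_eqI)
    ultimately show False by auto
  qed
  ultimately have "m \<in> left_ends Z" unfolding left_ends_def by (auto intro!: exI[of _ 1])
  then show ?thesis by auto
qed

lemma left_ends_Diff_Union_nonempty:
  assumes "Y = (\<Union>(a,b)\<in>P. {a..<b})" "{0..<L} - Y \<noteq> {}"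
  shows "left_ends ({0..<L} - Y) \<noteq> {}"
proof -
  let ?W = "{0..<L} - Y"
  define s where "s = Inf ?W"
  have bdd: "bdd_below ?W" by (auto intro: bdd_belowI[of _ 0])
  have low: "\<And>x. x \<in> ?W \<Longrightarrow> s \<le> x" unfolding s_def using bdd by (simp add: cInf_lower)
  have s0: "0 \<le> s" unfolding s_def by (rule cInf_greatest[OF assms(2)]) auto
  obtain w where w: "w \<in> ?W" using assms(2) by blast
  have sL: "s < L" using low[OF w] w by auto
  have "s \<notin> Y"
  proof
    assume "s \<in> Y"
    then obtain a b where ab: "(a,b) \<in> P" "a \<le> s" "s < b" using assms(1) by auto
    have "b \<le> x" if "x \<in> ?W" for x
      using low[OF that] that assms(1) ab by fastforce
    then have "b \<le> s" unfolding s_def using assms(2) by (intro cInf_greatest) auto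
    then show False using ab by auto
  qed
  then have "s \<in> ?W" using s0 sL by auto
  moreover have "{s - 1<..<s} \<inter> ?W = {}" using low by force
  ultimately have "s \<in> left_ends ?W" unfolding left_ends_def by (auto intro!: exI[of _ 1])
  then show ?thesis by auto
qed

locale piecewise_translation =
  fixes T :: "real \<Rightarrow> real" and L :: real and S :: "real set"
  assumes L_pos: "0 < L" and finite_cuts: "finite S" and zero_cut: "0 \<in> S"
    and cuts_in: "S \<subseteq> {0..<L}"
    and maps_to: "\<And>x. x \<in> {0..<L} \<Longrightarrow> T x \<in> {0..<L}"
    and inj: "inj_on T {0..<L}"
    and translation: "\<And>x y. 0 \<le> x \<Longrightarrow> x \<le> y \<Longrightarrow> y < L \<Longrightarrow> (\<forall>s\<in>S. \<not> (x < s \<and> s \<le> y))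
      \<Longrightarrow> T y = T x + (y - x)"
begin

lemma iter_in: "x \<in> {0..<L} \<Longrightarrow> (T^^n) x \<in> {0..<L}"
proof (induction n)
  case (Suc n) then show ?case using maps_to[of "(T^^n) x"] by simp
qed simp

lemma inj_on_iter: "inj_on (T^^n) {0..<L}"
proof (induction n)
  case (Suc n)
  have "inj_on (T \<circ> (T^^n)) {0..<L}"
    using Suc inj iter_in by (intro comp_inj_on) (auto intro: inj_on_subset)
  then show ?case by (simp add: comp_def)
qed simp

lemma iter_diff_eq:
  assumes "x \<in> {0..<L}" "y \<in> {0..<L}" "i \<le> j" "(T^^j) x = (T^^i) y"
  shows "(T^^(j - i)) x = y"
proof -
  have "(T^^i) ((T^^(j - i)) x) = (T^^i) y"
    using assms(3,4) by (metis le_add_diff_inverse funpow_add comp_apply)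
  then show ?thesis using inj_onD[OF inj_on_iter] iter_in assms(1,2) by blast
qed

lemma translation_step:
  assumes B: "{a..<b} \<subseteq> {0..<L}" "a < b" and c: "\<And>x. x \<in> {a..<b} \<Longrightarrow> (T^^j) x = x + c"
    and no_cut: "\<And>x. x \<in> {a..<b} \<Longrightarrow> (T^^j) x \<in> S \<Longrightarrow> x = a"
  shows "\<forall>x\<in>{a..<b}. (T^^Suc j) x = x + (T (a + c) - a)"
proof
  fix x assume x: "x \<in> {a..<b}"
  have aB: "a \<in> {a..<b}" using B by auto
  have "T (x + c) = T (a + c) + ((x + c) - (a + c))"
  proof (rule translation)
    have "(T^^j) a \<in> {0..<L}" "(T^^j) x \<in> {0..<L}" using iter_in aB x B by blast+
    then show "0 \<le> a + c" "x + c < L" using c x aB by auto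
    show "\<forall>s\<in>S. \<not> (a + c < s \<and> s \<le> x + c)"
    proof (intro ballI notI)
      fix s assume s: "s \<in> S" "a + c < s \<and> s \<le> x + c"
      then have "s - c \<in> {a..<b}" "(T^^j) (s - c) = s" using c x by auto
      then show False using no_cut[of "s - c"] s by auto
    qed
  qed (use x in auto)
  then show "(T^^Suc j) x = x + (T (a + c) - a)" using c x by simp
qed

lemma translates_apart:
  assumes B: "{a..<b} \<subseteq> {0..<L}" "a < b" and "i < j"
    and ci: "\<forall>x\<in>{a..<b}. (T^^i) x = x + ci" and cj: "\<forall>x\<in>{a..<b}. (T^^j) x = x + cj"
    and disj: "(T^^(j - i)) ` {a..<b} \<inter> {a..<b} = {}"
  shows "b - a \<le> \<bar>ci - cj\<bar>"
proof (rule ccontr)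
  let ?B = "{a..<b}"
  assume close: "\<not> b - a \<le> \<bar>ci - cj\<bar>"
  have aB: "a \<in> ?B" using B by auto
  obtain x y where xy: "x \<in> ?B" "y \<in> ?B" "(T^^j) x = (T^^i) y"
  proof (cases "ci \<le> cj")
    case True
    then have "a + (cj - ci) \<in> ?B" using close by auto
    moreover have "(T^^j) a = (T^^i) (a + (cj - ci))" using ci cj aB calculation by simp
    ultimately show ?thesis using that aB by blast
  next
    case False
    then have "a + (ci - cj) \<in> ?B" using close by auto
    moreover have "(T^^j) (a + (ci - cj)) = (T^^i) a" using ci cj aB calculation by simp
    ultimately show ?thesis using that aB by blast
  qed
  then have "(T^^(j - i)) x = y" using iter_diff_eq B \<open>i < j\<close> by auto
  then show False using xy disj by blast
qed

text \<open>Pigeonhole: N + 1 translates of a block of length b - a cannot be disjoint in [0, L)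
  when N (b - a) > L.\<close>

lemma translated_block_meets_itself:
  assumes B: "{a..<b} \<subseteq> {0..<L}" "a < b"
    and tr: "\<And>j. j \<le> N \<Longrightarrow> \<exists>c. \<forall>x\<in>{a..<b}. (T^^j) x = x + c"
    and N: "L / (b - a) < N"
  shows "\<exists>i. 1 \<le> i \<and> i \<le> N \<and> (T^^i) ` {a..<b} \<inter> {a..<b} \<noteq> {}"
proof (rule ccontr)
  assume "\<not> ?thesis"
  then have disj: "\<And>i. 1 \<le> i \<Longrightarrow> i \<le> N \<Longrightarrow> (T^^i) ` {a..<b} \<inter> {a..<b} = {}" by auto
  obtain cc where cc: "\<forall>j\<le>N. \<forall>x\<in>{a..<b}. (T^^j) x = x + cc j" using tr by metis
  have sep: "b - a \<le> \<bar>cc i - cc j\<bar>" if "i < j" "j \<le> N" for i j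
    using translates_apart[OF B that(1)] cc disj that by simp
  have aB: "a \<in> {a..<b}" using B by auto
  have "real N \<le> L / (b - a)"
  proof (rule separated_points_bound[where u = "\<lambda>j. a + cc j"])
    show "0 \<le> a + cc i \<and> a + cc i < L" if "i \<le> N" for i
      using iter_in[of a i] aB B cc that by auto
    show "b - a \<le> \<bar>(a + cc i) - (a + cc j)\<bar>" if "i \<le> N" "j \<le> N" "i \<noteq> j" for i j
      using sep[of i j] sep[of j i] that by (cases "i < j") (auto simp: abs_minus_commute)
  qed (use B in auto)
  then show False using N by linarith
qed

definition first_return_block :: "real set \<Rightarrow> real \<Rightarrow> real \<Rightarrow> nat \<Rightarrow> bool" where
  "first_return_block W a b r \<longleftrightarrow> 1 \<le> r \<and> (\<forall>j\<le>r. \<exists>c. \<forall>x\<in>{a..<b}. (T^^j) x = x + c)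
     \<and> (T^^r) ` {a..<b} \<subseteq> W \<and> (\<forall>j. 1 \<le> j \<longrightarrow> j < r \<longrightarrow> (T^^j) ` {a..<b} \<inter> W = {})"

lemma first_return_block_image:
  assumes "first_return_block W a b r" "j \<le> r" "a < b"
  shows "(T^^j) ` {a..<b} = {(T^^j) a..<(T^^j) a + (b - a)}"
proof -
  obtain c where c: "\<forall>x\<in>{a..<b}. (T^^j) x = x + c"
    using assms(1,2) unfolding first_return_block_def by blast
  then have "(T^^j) ` {a..<b} = (\<lambda>x. x + c) ` {a..<b}" by (intro image_cong) auto
  moreover have "(T^^j) a = a + c" using c assms(3) by auto
  ultimately show ?thesis by (simp add: add.commute)
qed

definition invariant :: "real set \<Rightarrow> bool" where
  "invariant Z \<longleftrightarrow> Z \<subseteq> {0..<L} \<and> (\<forall>z\<in>{0..<L}. T z \<in> Z \<longleftrightarrow> z \<in> Z)"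

lemma invariant_Diff: "invariant Z \<Longrightarrow> invariant ({0..<L} - Z)"
  unfolding invariant_def using maps_to by auto

definition cut_below :: "real \<Rightarrow> real" where
  "cut_below u = Max {t\<in>S. t \<le> u}"

lemma cut_below:
  assumes "u \<in> {0..<L}"
  shows "cut_below u \<in> S" "cut_below u \<le> u" "\<And>t. t \<in> S \<Longrightarrow> t \<le> u \<Longrightarrow> t \<le> cut_below u"
proof -
  have fin: "finite {t\<in>S. t \<le> u}" using finite_cuts by auto
  have "0 \<in> {t\<in>S. t \<le> u}" using zero_cut assms by auto
  then have "cut_below u \<in> {t\<in>S. t \<le> u}" unfolding cut_below_def using fin by (intro Max_in) auto
  then show "cut_below u \<in> S" "cut_below u \<le> u" by auto
  show "\<And>t. t \<in> S \<Longrightarrow> t \<le> u \<Longrightarrow> t \<le> cut_below u" unfolding cut_below_def using fin by auto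
qed

lemma translate_down:
  assumes "u \<in> {0..<L}" "0 \<le> e" "e \<le> u - cut_below u"
  shows "T (u - e) = T u - e"
proof -
  have "T u = T (u - e) + (u - (u - e))"
  proof (rule translation)
    show "0 \<le> u - e" using assms cut_below(1)[OF assms(1)] cuts_in by force
    show "\<forall>t\<in>S. \<not> (u - e < t \<and> t \<le> u)" using assms cut_below(3)[OF assms(1)] by force
  qed (use assms in auto)
  then show ?thesis by simp
qed

text \<open>Shifting a periodic orbit down by its least distance to the cuts keeps it periodic
  (all its points are translated rigidly) and lands one of its points on a cut.\<close>

lemma periodic_cut:
  assumes s: "s \<in> {0..<L}" and k: "1 \<le> k" and per: "(T^^k) s = s"
  obtains z where "z \<in> S" "(T^^k) z = z"
proof -
  define Ob where "Ob = (\<lambda>i. (T^^i) s) ` {..<k}"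
  have sO: "s \<in> Ob" unfolding Ob_def using k by (auto intro!: image_eqI[of _ _ 0])
  have OI: "Ob \<subseteq> {0..<L}" unfolding Ob_def using iter_in s by auto
  have Ocl: "T u \<in> Ob" if uO: "u \<in> Ob" for u
  proof -
    obtain i where i: "i < k" "u = (T^^i) s" using uO unfolding Ob_def by blast
    show ?thesis
    proof (cases "Suc i < k")
      case True then show ?thesis using i unfolding Ob_def by (auto intro!: image_eqI[of _ _ "Suc i"])
    next
      case False then have "Suc i = k" using i by auto
      then show ?thesis using i per sO by auto
    qed
  qed
  define g where "g u = u - cut_below u" for u
  define gm where "gm = Min (g ` Ob)"
  have "gm \<in> g ` Ob" unfolding gm_def using sO by (intro Min_in) (auto simp: Ob_def)
  then obtain os where os: "os \<in> Ob" "g os = gm" by auto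
  have gmle: "gm \<le> g u" if "u \<in> Ob" for u unfolding gm_def using that by (auto simp: Ob_def)
  have gm0: "0 \<le> gm" using os cut_below[of os] OI unfolding g_def by auto
  have iter: "(T^^i) (os - gm) = (T^^i) os - gm \<and> (T^^i) os \<in> Ob" for i
  proof (induction i)
    case (Suc i)
    then show ?case using translate_down[of "(T^^i) os" gm] gmle[of "(T^^i) os"] OI Ocl gm0
      unfolding g_def by auto
  qed (use os in simp)
  obtain i0 where i0: "os = (T^^i0) s" using os unfolding Ob_def by auto
  have "(T^^k) os = (T^^i0) ((T^^k) s)" using i0 by (metis add.commute comp_apply funpow_add)
  then have "(T^^k) os = os" using per i0 by simp
  then have "(T^^k) (os - gm) = os - gm" using iter[of k] by simp
  moreover have "os - gm \<in> S" using os cut_below[of os] OI unfolding g_def by auto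
  ultimately show ?thesis using that by blast
qed

lemma left_end_image:
  assumes Z: "invariant Z" and s: "s \<in> left_ends Z" "s \<notin> S"
  shows "T s \<in> left_ends Z"
proof -
  have sZ: "s \<in> Z" using s unfolding left_ends_def by auto
  obtain \<delta> where d: "\<delta> > 0" "{s - \<delta><..<s} \<inter> Z = {}" using s unfolding left_ends_def by auto
  have "s \<noteq> 0" using s(2) zero_cut by auto
  then have sI: "0 < s" "s < L" using sZ Z unfolding invariant_def by auto
  define \<sigma> where "\<sigma> = Max {t\<in>S. t < s}"
  have fin: "finite {t\<in>S. t < s}" using finite_cuts by auto
  have \<sigma>in: "\<sigma> \<in> {t\<in>S. t < s}" unfolding \<sigma>_def using fin zero_cut sI by (intro Max_in) auto
  have \<sigma>ge: "\<And>t. t \<in> S \<Longrightarrow> t < s \<Longrightarrow> t \<le> \<sigma>" unfolding \<sigma>_def using fin by auto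
  have \<sigma>0: "0 \<le> \<sigma>" using \<sigma>ge[of 0] zero_cut sI by auto
  define \<delta>' where "\<delta>' = min \<delta> (s - \<sigma>)"
  have d': "\<delta>' > 0" "\<delta>' \<le> \<delta>" "\<delta>' \<le> s - \<sigma>" unfolding \<delta>'_def using d \<sigma>in by auto
  \<comment> \<open>just left of s, T is the translation by T s - s, so the gap below s moves to T s\<close>
  have "x \<notin> Z" if x: "T s - \<delta>' < x" "x < T s" for x
  proof -
    define y where "y = s - (T s - x)"
    have y: "\<sigma> < y" "y < s" "s - \<delta> < y" using x d' unfolding y_def by auto
    have "T s = T y + (s - y)"
      by (rule translation) (use y \<sigma>0 sI s(2) \<sigma>ge in force)+
    then have "T y = x" unfolding y_def by simp
    moreover have "y \<notin> Z" using d y by auto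
    ultimately show "x \<notin> Z" using Z y \<sigma>0 sI unfolding invariant_def by auto
  qed
  then have "{T s - \<delta>'<..<T s} \<inter> Z = {}" by auto
  moreover have "T s \<in> Z" using Z sZ unfolding invariant_def by auto
  ultimately show ?thesis using d' unfolding left_ends_def by auto
qed

lemma left_end_orbit:
  assumes Z: "invariant Z" "finite (left_ends Z)" and s: "s \<in> left_ends Z"
  shows "(\<exists>m. (T^^m) s \<in> S) \<or> (\<exists>k\<ge>1. (T^^k) s = s)"
proof (cases "\<exists>m. (T^^m) s \<in> S")
  case none: False
  have "(T^^m) s \<in> left_ends Z" for m
    by (induction m) (use s left_end_image[OF Z(1)] none in auto)
  then obtain i j where ij: "i < j" "(T^^i) s = (T^^j) s" by (rule finite_orbit_repeats[OF Z(2)])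
  have "s \<in> {0..<L}" using s Z unfolding left_ends_def invariant_def by auto
  then have "(T^^(j - i)) s = s" using iter_diff_eq ij by simp
  then show ?thesis using ij by (intro disjI2 exI[of _ "j - i"]) auto
qed simp

end

text \<open>Return times to a window [p, q) are controlled by a finite set of points: those whose
  orbit hits p, q or a cut before coming back. Between consecutive such points
  every iterate up to the first return is a translation.\<close>

locale return_window = piecewise_translation +
  fixes p q :: real
  assumes window: "0 \<le> p" "p < q" "q \<le> L"
begin

abbreviation W :: "real set" where "W \<equiv> {p..<q}"

lemma window_in: "W \<subseteq> {0..<L}" using window by auto

definition first_hits :: "real set" where
  "first_hits = {w \<in> W. \<exists>n. (T^^n) w \<in> insert p (insert q S) \<and> (\<forall>i. 1 \<le> i \<longrightarrow> i < n \<longrightarrow> (T^^i) w \<notin> W)}"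

lemma first_hit_unique:
  assumes w1: "w1 \<in> W" "(T^^n1) w1 = f" "w1 \<noteq> f"
    and w2: "w2 \<in> W" "(T^^n2) w2 = f" "\<forall>i. 1 \<le> i \<longrightarrow> i < n2 \<longrightarrow> (T^^i) w2 \<notin> W"
    and "n1 \<le> n2"
  shows "w1 = w2"
proof -
  have ret: "(T^^(n2 - n1)) w2 = w1" using iter_diff_eq window_in w1 w2 \<open>n1 \<le> n2\<close> by auto
  have "n1 \<noteq> 0" using w1(2,3) by (metis funpow_0)
  show ?thesis
  proof (cases "n1 = n2")
    case False
    then have "1 \<le> n2 - n1" "n2 - n1 < n2" using \<open>n1 \<le> n2\<close> \<open>n1 \<noteq> 0\<close> by auto
    then show ?thesis using w2(3) w1(1) ret by blast
  qed (use ret in simp)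
qed

lemma finite_first_hits: "finite first_hits"
proof -
  have fin: "finite {w \<in> W. \<exists>n. (T^^n) w = f \<and> (\<forall>i. 1 \<le> i \<longrightarrow> i < n \<longrightarrow> (T^^i) w \<notin> W)}"
    (is "finite ?Z") for f
  proof -
    have uniq: "w1 = w2" if w: "w1 \<in> ?Z - {f}" "w2 \<in> ?Z - {f}" for w1 w2
    proof -
      obtain n1 where n1: "w1 \<in> W" "(T^^n1) w1 = f" "\<forall>i. 1 \<le> i \<longrightarrow> i < n1 \<longrightarrow> (T^^i) w1 \<notin> W" "w1 \<noteq> f"
        using w(1) by blast
      obtain n2 where n2: "w2 \<in> W" "(T^^n2) w2 = f" "\<forall>i. 1 \<le> i \<longrightarrow> i < n2 \<longrightarrow> (T^^i) w2 \<notin> W" "w2 \<noteq> f"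
        using w(2) by blast
      show ?thesis
        using first_hit_unique[of w1 n1 f w2 n2] first_hit_unique[of w2 n2 f w1 n1] n1 n2
        by (cases "n1 \<le> n2") auto
    qed
    obtain w0 where "?Z \<subseteq> {f, w0}"
    proof (cases "?Z - {f} = {}")
      case False
      then obtain w0 where "w0 \<in> ?Z - {f}" by blast
      then show ?thesis using uniq that[of w0] by blast
    qed (use that in blast)
    then show ?thesis by (rule finite_subset) simp
  qed
  have "first_hits \<subseteq> (\<Union>f\<in>insert p (insert q S).
      {w \<in> W. \<exists>n. (T^^n) w = f \<and> (\<forall>i. 1 \<le> i \<longrightarrow> i < n \<longrightarrow> (T^^i) w \<notin> W)})"
    unfolding first_hits_def by blast
  then show ?thesis using fin finite_cuts by (meson finite_UN_I finite_insert finite_subset)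
qed

lemma block_hits_at_left_end:
  assumes ab: "p \<le> a" "a < b" "b \<le> q" and no_hit: "\<forall>\<zeta>\<in>first_hits. \<not> (a < \<zeta> \<and> \<zeta> < b)"
    and avoid: "\<forall>i. 1 \<le> i \<longrightarrow> i < n \<longrightarrow> (T^^i) ` {a..<b} \<inter> W = {}"
    and w: "w \<in> {a..<b}" "(T^^n) w \<in> insert p (insert q S)"
  shows "w = a"
proof -
  have "(T^^i) w \<notin> W" if "1 \<le> i" "i < n" for i
    using avoid that w(1) by blast
  then have "w \<in> first_hits" unfolding first_hits_def using ab w by auto
  then show ?thesis using no_hit w by force
qed

lemma block_translates:
  assumes ab: "p \<le> a" "a < b" "b \<le> q" and no_hit: "\<forall>\<zeta>\<in>first_hits. \<not> (a < \<zeta> \<and> \<zeta> < b)"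
    and "\<forall>i. 1 \<le> i \<longrightarrow> i < j \<longrightarrow> (T^^i) ` {a..<b} \<inter> W = {}"
  shows "(\<exists>c. \<forall>x\<in>{a..<b}. (T^^j) x = x + c)
    \<and> (1 \<le> j \<longrightarrow> (T^^j) ` {a..<b} \<subseteq> W \<or> (T^^j) ` {a..<b} \<inter> W = {})"
  using assms(5)
proof (induction j)
  case (Suc j)
  let ?B = "{a..<b}"
  have BI: "?B \<subseteq> {0..<L}" using ab window by auto
  have "\<forall>i. 1 \<le> i \<longrightarrow> i < j \<longrightarrow> (T^^i) ` ?B \<inter> W = {}" using Suc.prems by auto
  then obtain c where c: "\<forall>x\<in>?B. (T^^j) x = x + c" using Suc.IH by blast
  note left_end = block_hits_at_left_end[OF ab no_hit]
  define c' where "c' = T (a + c) - a"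
  have step: "\<forall>x\<in>?B. (T^^Suc j) x = x + c'"
    unfolding c'_def using Suc.prems c left_end[of j]
    by (intro translation_step[OF BI \<open>a < b\<close>]) auto
  \<comment> \<open>a block straddling p or q would contain a point hitting p or q, other than a\<close>
  moreover have "(T^^Suc j) ` ?B \<subseteq> W \<or> (T^^Suc j) ` ?B \<inter> W = {}"
  proof (rule ccontr)
    assume "\<not> ?thesis"
    then obtain x1 x2 where x12: "x1 \<in> ?B" "(T^^Suc j) x1 \<in> W" "x2 \<in> ?B" "(T^^Suc j) x2 \<notin> W"
      by blast
    moreover have "(T^^Suc j) x1 = x1 + c'" "(T^^Suc j) x2 = x2 + c'" using step x12 by blast+
    ultimately have x: "x1 \<in> ?B" "x1 + c' \<in> W" "x2 \<in> ?B" "x2 + c' \<notin> W" by simp_all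
    obtain e where e: "e \<in> {p, q}" "e - c' \<in> ?B" "a < e - c'"
    proof (cases "x2 + c' < p")
      case True then show ?thesis using that[of p] x by auto
    next
      case False then show ?thesis using that[of q] x by auto
    qed
    then have "(T^^Suc j) (e - c') \<in> insert p (insert q S)" using step by auto
    then have "e - c' = a" by (rule left_end[OF Suc.prems e(2)])
    then show False using e(3) by simp
  qed
  ultimately show ?case by blast
qed (auto intro: exI[of _ 0])

lemma block_first_return:
  assumes ab: "p \<le> a" "a < b" "b \<le> q" and no_hit: "\<forall>\<zeta>\<in>first_hits. \<not> (a < \<zeta> \<and> \<zeta> < b)"
  shows "\<exists>r. first_return_block W a b r"
proof -
  let ?B = "{a..<b}"
  let ?ret = "\<lambda>r. 1 \<le> r \<and> (T^^r) ` ?B \<inter> W \<noteq> {}"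
  note H = block_translates[OF ab no_hit]
  have BW: "?B \<subseteq> W" using ab by auto
  have ex: "\<exists>r. ?ret r"
  proof (rule ccontr)
    assume "\<not> ?thesis"
    then have "\<forall>i. 1 \<le> i \<longrightarrow> (T^^i) ` ?B \<inter> W = {}" by auto
    moreover have "\<exists>i. 1 \<le> i \<and> i \<le> N \<and> (T^^i) ` ?B \<inter> ?B \<noteq> {}" if "L / (b - a) < real N" for N
      using translated_block_meets_itself[OF _ \<open>a < b\<close> _ that] H calculation BW window_in by auto
    ultimately show False using BW reals_Archimedean2[of "L / (b - a)"] by blast
  qed
  define r where "r = (LEAST r. ?ret r)"
  have r: "?ret r" using LeastI_ex[OF ex] unfolding r_def .
  have rmin: "\<forall>j. 1 \<le> j \<longrightarrow> j < r \<longrightarrow> (T^^j) ` ?B \<inter> W = {}"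
    using not_less_Least[of _ ?ret] unfolding r_def by blast
  have "(T^^r) ` ?B \<subseteq> W" using H[of r] rmin r by auto
  moreover have "\<forall>j\<le>r. \<exists>c. \<forall>x\<in>?B. (T^^j) x = x + c" using H rmin by auto
  ultimately show ?thesis unfolding first_return_block_def using r rmin by blast
qed

definition breaks :: "real set" where "breaks = insert p (insert q first_hits)"
definition lower_break :: "real \<Rightarrow> real" where "lower_break z = Max {\<zeta>\<in>breaks. \<zeta> \<le> z}"
definition upper_break :: "real \<Rightarrow> real" where "upper_break z = Min {\<zeta>\<in>breaks. z < \<zeta>}"

lemma break_bounds:
  assumes "z \<in> W"
  shows "p \<le> lower_break z" "lower_break z \<le> z" "z < upper_break z" "upper_break z \<le> q"
    "\<forall>\<zeta>\<in>first_hits. \<not> (lower_break z < \<zeta> \<and> \<zeta> < upper_break z)"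
    "lower_break z \<in> breaks" "upper_break z \<in> breaks"
proof -
  have fin: "finite {\<zeta>\<in>breaks. \<zeta> \<le> z}" "finite {\<zeta>\<in>breaks. z < \<zeta>}"
    using finite_first_hits unfolding breaks_def by auto
  have pq: "p \<in> {\<zeta>\<in>breaks. \<zeta> \<le> z}" "q \<in> {\<zeta>\<in>breaks. z < \<zeta>}" using assms unfolding breaks_def by auto
  have l: "lower_break z \<in> {\<zeta>\<in>breaks. \<zeta> \<le> z}" unfolding lower_break_def using fin pq by (intro Max_in) auto
  have h: "upper_break z \<in> {\<zeta>\<in>breaks. z < \<zeta>}" unfolding upper_break_def using fin pq by (intro Min_in) auto
  show "p \<le> lower_break z" unfolding lower_break_def using fin pq by (intro Max_ge) auto
  show "upper_break z \<le> q" unfolding upper_break_def using fin pq by (intro Min_le) auto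
  show "lower_break z \<le> z" "z < upper_break z" "lower_break z \<in> breaks" "upper_break z \<in> breaks"
    using l h by auto
  show "\<forall>\<zeta>\<in>first_hits. \<not> (lower_break z < \<zeta> \<and> \<zeta> < upper_break z)"
  proof (intro ballI notI)
    fix \<zeta> assume \<zeta>: "\<zeta> \<in> first_hits" "lower_break z < \<zeta> \<and> \<zeta> < upper_break z"
    then have "\<zeta> \<in> breaks" unfolding breaks_def by auto
    then have "\<zeta> \<le> lower_break z \<or> upper_break z \<le> \<zeta>"
      using fin unfolding lower_break_def upper_break_def by (cases "\<zeta> \<le> z") (auto intro: Max_ge Min_le)
    then show False using \<zeta> by auto
  qed
qed

lemma window_tower:
  obtains P where "finite P" "W = (\<Union>(a,b)\<in>P. {a..<b})"
    "\<And>a b. (a,b) \<in> P \<Longrightarrow> p \<le> a \<and> a < b \<and> b \<le> q \<and> (\<exists>r. first_return_block W a b r)"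
proof
  let ?P = "(\<lambda>z. (lower_break z, upper_break z)) ` W"
  have "?P \<subseteq> breaks \<times> breaks" using break_bounds(6,7) by auto
  then show "finite ?P" using finite_first_hits unfolding breaks_def by (meson finite_SigmaI finite_insert finite_subset)
  show "W = (\<Union>(a,b)\<in>?P. {a..<b})"
  proof
    show "W \<subseteq> (\<Union>(a,b)\<in>?P. {a..<b})" using break_bounds(2,3) by fastforce
    show "(\<Union>(a,b)\<in>?P. {a..<b}) \<subseteq> W" using break_bounds(1,4) by fastforce
  qed
  fix a b assume "(a,b) \<in> ?P"
  then obtain z where "z \<in> W" "a = lower_break z" "b = upper_break z" by blast
  then show "p \<le> a \<and> a < b \<and> b \<le> q \<and> (\<exists>r. first_return_block W a b r)"
    using break_bounds[of z] block_first_return[of a b] by force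
qed

end

context piecewise_translation
begin

lemma return_tower:
  assumes "0 \<le> p" "p < q" "q \<le> L"
  obtains P where "finite P" "{p..<q} = (\<Union>(a,b)\<in>P. {a..<b})"
    "\<And>a b. (a,b) \<in> P \<Longrightarrow> p \<le> a \<and> a < b \<and> b \<le> q \<and> (\<exists>r. first_return_block {p..<q} a b r)"
proof -
  interpret return_window T L S p q
    using piecewise_translation_axioms assms by (simp add: return_window_def return_window_axioms_def)
  show ?thesis using window_tower that by blast
qed

lemma recurrence:
  assumes "0 \<le> p" "p < q" "q \<le> L" "z \<in> {p..<q}"
  shows "\<exists>n\<ge>1. (T^^n) z \<in> {p..<q}"
proof -
  obtain P where P: "{p..<q} = (\<Union>(a,b)\<in>P. {a..<b})"
    "\<And>a b. (a,b) \<in> P \<Longrightarrow> \<exists>r. first_return_block {p..<q} a b r"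
    using return_tower[OF assms(1-3)] by metis
  obtain a b where "(a,b) \<in> P" "z \<in> {a..<b}" using assms(4) P(1) by auto
  then show ?thesis using P(2) unfolding first_return_block_def by blast
qed

end

locale keane_translation = F: piecewise_translation T L S + B: piecewise_translation T' L S'
  for T T' L S S' +
  assumes inverse_left: "\<And>x. x \<in> {0..<L} \<Longrightarrow> T' (T x) = x"
    and inverse_right: "\<And>x. x \<in> {0..<L} \<Longrightarrow> T (T' x) = x"
    and no_connection: "\<And>z s m. z \<in> S \<Longrightarrow> s \<in> S \<Longrightarrow> s \<noteq> 0 \<Longrightarrow> 1 \<le> m \<Longrightarrow> (T^^m) z \<noteq> s"
    and zero_moves: "T 0 \<noteq> 0"
    and cuts_inverse: "S' = T ` S"
begin

lemma iter_inverse_left: "x \<in> {0..<L} \<Longrightarrow> (T'^^n) ((T^^n) x) = x"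
proof (induction n arbitrary: x)
  case (Suc n)
  have "(T'^^Suc n) ((T^^Suc n) x) = (T'^^n) (T' (T ((T^^n) x)))"
    by (simp add: funpow_swap1)
  also have "\<dots> = (T'^^n) ((T^^n) x)" using inverse_left F.iter_in Suc.prems by simp
  finally show ?case using Suc by simp
qed simp

lemma iter_inverse_right: "x \<in> {0..<L} \<Longrightarrow> (T^^n) ((T'^^n) x) = x"
proof (induction n arbitrary: x)
  case (Suc n)
  have "(T^^Suc n) ((T'^^Suc n) x) = (T^^n) (T (T' ((T'^^n) x)))"
    by (simp add: funpow_swap1)
  also have "\<dots> = (T^^n) ((T'^^n) x)" using inverse_right B.iter_in Suc.prems by simp
  finally show ?case using Suc by simp
qed simp

lemma inverse_zero: "T' 0 \<in> S" "T' 0 \<noteq> 0"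
proof -
  obtain c where c: "c \<in> S" "T c = 0" using B.zero_cut cuts_inverse by auto
  then have "T' 0 = c" using inverse_left F.cuts_in by force
  then show "T' 0 \<in> S" "T' 0 \<noteq> 0" using c zero_moves by auto
qed

lemma no_periodic_point:
  assumes "s \<in> {0..<L}" "1 \<le> k" "(T^^k) s = s"
  shows False
proof -
  obtain z where z: "z \<in> S" "(T^^k) z = z" using F.periodic_cut assms by blast
  show False
  proof (cases "z = 0")
    case False then show False using no_connection[OF z(1) z(1) False assms(2)] z(2) by simp
  next
    case True
    obtain k' where k: "k = Suc k'" using assms(2) by (cases k) auto
    have "(T^^k') 0 = T' ((T^^k) 0)" using inverse_left F.iter_in F.L_pos k by simp
    then have "(T^^k') 0 = T' 0" using z True by simp
    moreover have "k' \<noteq> 0"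
    proof
      assume "k' = 0"
      then show False using k True z zero_moves by simp
    qed
    ultimately show False using no_connection[OF F.zero_cut inverse_zero, of k'] by simp
  qed
qed

text \<open>Keane's argument: the orbit of a left end point of an invariant finite union of
  intervals must run into a cut both forwards and backwards; the condition on cut
  connections then forces it to be 0.\<close>

lemma invariant_left_end_zero:
  assumes inv: "F.invariant Z" "B.invariant Z" and fin: "finite (left_ends Z)"
    and s: "s \<in> left_ends Z"
  shows "s = 0"
proof -
  have sI: "s \<in> {0..<L}" using s inv unfolding left_ends_def F.invariant_def by auto
  obtain m where m: "(T^^m) s \<in> S"
    using F.left_end_orbit[OF inv(1) fin s] no_periodic_point[OF sI] by blast
  have "\<exists>n. (T'^^n) s \<in> S'"
  proof -
    have "(T^^k) s = s" if "(T'^^k) s = s" for k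
      using iter_inverse_right[OF sI, of k] that by simp
    then show ?thesis using B.left_end_orbit[OF inv(2) fin s] no_periodic_point[OF sI] by blast
  qed
  then obtain n z where z: "z \<in> S" "(T'^^n) s = T z" using cuts_inverse by auto
  have "s = (T^^n) ((T'^^n) s)" using iter_inverse_right[OF sI] by simp
  then have sz: "s = (T^^Suc n) z" using z by (simp add: funpow_swap1)
  then have "(T^^m) s = (T^^(m + Suc n)) z" by (simp only: funpow_add comp_apply)
  then have mz: "(T^^m) s = T ((T^^(m + n)) z)" by simp
  then have T0: "(T^^m) s = 0" using no_connection[OF z(1) m _, of "m + Suc n"] by auto
  have "T ((T^^(m + n)) z) = T (T' 0)" using mz T0 inverse_right F.L_pos by simp
  then have "(T^^(m + n)) z = T' 0"
    using inj_onD[OF F.inj] F.iter_in z(1) F.cuts_in B.cuts_in B.zero_cut cuts_inverse inverse_zero(1)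
    by (meson subsetD)
  have "m + n = 0"
  proof (rule ccontr)
    assume "m + n \<noteq> 0"
    then have "1 \<le> m + n" by arith
    then show False using no_connection[OF z(1) inverse_zero \<open>1 \<le> m + n\<close>] \<open>(T^^(m + n)) z = T' 0\<close> by simp
  qed
  then show "s = 0" using T0 by simp
qed

definition hitting_set :: "real \<Rightarrow> real \<Rightarrow> real set" where
  "hitting_set p q = {y \<in> {0..<L}. \<exists>n. (T^^n) y \<in> {p..<q}}"

lemma hitting_set_iff_return:
  assumes "0 \<le> p" "p < q" "q \<le> L" "y \<in> {0..<L}"
  shows "y \<in> hitting_set p q \<longleftrightarrow> (\<exists>n. (T^^Suc n) y \<in> {p..<q})"
proof
  assume "y \<in> hitting_set p q"
  then obtain n where n: "(T^^n) y \<in> {p..<q}" unfolding hitting_set_def by blast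
  show "\<exists>n. (T^^Suc n) y \<in> {p..<q}"
  proof (cases n)
    case 0
    then obtain m where "m \<ge> 1" "(T^^m) y \<in> {p..<q}" using F.recurrence[OF assms(1-3)] n by auto
    then show ?thesis by (metis Suc_diff_1 less_eq_Suc_le One_nat_def)
  qed (use n in blast)
next
  assume "\<exists>n. (T^^Suc n) y \<in> {p..<q}"
  then show "y \<in> hitting_set p q" unfolding hitting_set_def using assms(4) by blast
qed

lemma hitting_set_invariant:
  assumes pq: "0 \<le> p" "p < q" "q \<le> L"
  shows "F.invariant (hitting_set p q)" "B.invariant (hitting_set p q)"
proof -
  let ?H = "hitting_set p q"
  have H: "?H \<subseteq> {0..<L}" unfolding hitting_set_def by auto
  show "F.invariant ?H" unfolding F.invariant_def
  proof (intro conjI H ballI)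
    fix z assume z: "z \<in> {0..<L}"
    have "T z \<in> ?H \<longleftrightarrow> (\<exists>n. (T^^n) (T z) \<in> {p..<q})"
      using F.maps_to[OF z] unfolding hitting_set_def by blast
    also have "\<dots> \<longleftrightarrow> z \<in> ?H" using hitting_set_iff_return[OF pq z] by (simp add: funpow_swap1)
    finally show "T z \<in> ?H \<longleftrightarrow> z \<in> ?H" .
  qed
  show "B.invariant ?H" unfolding B.invariant_def
  proof (intro conjI H ballI)
    fix z assume z: "z \<in> {0..<L}"
    have "T' z \<in> ?H \<longleftrightarrow> (\<exists>n. (T^^Suc n) (T' z) \<in> {p..<q})"
      using hitting_set_iff_return[OF pq B.maps_to[OF z]] .
    also have "\<dots> \<longleftrightarrow> z \<in> ?H"
      using inverse_right[OF z] z unfolding hitting_set_def by (simp add: funpow_swap1)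
    finally show "T' z \<in> ?H \<longleftrightarrow> z \<in> ?H" .
  qed
qed

lemma hitting_set_tower:
  assumes pq: "0 \<le> p" "p < q" "q \<le> L" and P: "{p..<q} = (\<Union>(a,b)\<in>P. {a..<b})"
    and R: "\<And>a b. (a,b) \<in> P \<Longrightarrow> B.first_return_block {p..<q} a b (R a b)"
  shows "hitting_set p q = (\<Union>(a,b)\<in>P. \<Union>j<R a b. (T'^^j) ` {a..<b})"
proof
  let ?Q = "{p..<q}"
  show "(\<Union>(a,b)\<in>P. \<Union>j<R a b. (T'^^j) ` {a..<b}) \<subseteq> hitting_set p q"
  proof clarify
    fix a b j x assume "(a,b) \<in> P" "x \<in> {a..<b}"
    then have "x \<in> ?Q" using P by blast
    then have "x \<in> {0..<L}" "(T^^j) ((T'^^j) x) = x" using iter_inverse_right pq by auto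
    then have "(T'^^j) x \<in> {0..<L}" "(T^^j) ((T'^^j) x) \<in> ?Q" using B.iter_in \<open>x \<in> ?Q\<close> by auto
    then show "(T'^^j) x \<in> hitting_set p q" unfolding hitting_set_def by blast
  qed
  show "hitting_set p q \<subseteq> (\<Union>(a,b)\<in>P. \<Union>j<R a b. (T'^^j) ` {a..<b})"
  proof
    fix y assume "y \<in> hitting_set p q"
    then have yI: "y \<in> {0..<L}" and ex: "\<exists>n. (T^^n) y \<in> ?Q" unfolding hitting_set_def by auto
    define n where "n = (LEAST n. (T^^n) y \<in> ?Q)"
    have nQ: "(T^^n) y \<in> ?Q" unfolding n_def using ex by (rule LeastI_ex)
    have nmin: "\<And>m. m < n \<Longrightarrow> (T^^m) y \<notin> ?Q" unfolding n_def using not_less_Least by blast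
    obtain a b where ab: "(a,b) \<in> P" "(T^^n) y \<in> {a..<b}" using nQ P by auto
    have "n < R a b"
    proof (rule ccontr)
      assume "\<not> n < R a b"
      \<comment> \<open>otherwise T' brings the block back into [p, q) before time n\<close>
      then have "(T^^n) y = (T^^R a b) ((T^^(n - R a b)) y)"
        by (metis funpow_add le_add_diff_inverse not_less comp_apply)
      moreover have "(T'^^R a b) ((T^^n) y) \<in> ?Q"
        using R[OF ab(1)] ab(2) unfolding B.first_return_block_def by blast
      ultimately have "(T^^(n - R a b)) y \<in> ?Q" using iter_inverse_left F.iter_in[OF yI] by metis
      moreover have "n - R a b < n"
        using R[OF ab(1)] \<open>\<not> n < R a b\<close> unfolding B.first_return_block_def by auto
      ultimately show False using nmin by blast
    qed
    moreover have "y = (T'^^n) ((T^^n) y)" using iter_inverse_left yI by simp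
    ultimately show "y \<in> (\<Union>(a,b)\<in>P. \<Union>j<R a b. (T'^^j) ` {a..<b})" using ab by blast
  qed
qed

lemma hitting_set_intervals:
  assumes pq: "0 \<le> p" "p < q" "q \<le> L"
  obtains P where "finite P" "hitting_set p q = (\<Union>(a,b)\<in>P. {a..<b})" "\<And>a b. (a,b) \<in> P \<Longrightarrow> a < b"
proof -
  let ?Q = "{p..<q}"
  obtain P where P: "finite P" "?Q = (\<Union>(a,b)\<in>P. {a..<b})"
    "\<And>a b. (a,b) \<in> P \<Longrightarrow> p \<le> a \<and> a < b \<and> b \<le> q \<and> (\<exists>r. B.first_return_block ?Q a b r)"
    using B.return_tower[OF pq] by blast
  define R where "R a b = (SOME r. B.first_return_block ?Q a b r)" for a b
  have R: "B.first_return_block ?Q a b (R a b)" if "(a,b) \<in> P" for a b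
    unfolding R_def using P(3)[OF that] by (blast intro: someI_ex)
  have interval: "(T'^^j) ` {a..<b} = {(T'^^j) a..<(T'^^j) a + (b - a)}"
    if "(a,b) \<in> P" "j \<le> R a b" for a b j
    using B.first_return_block_image[OF R] P(3) that by blast
  define P' where "P' = (\<lambda>((a,b),j). ((T'^^j) a, (T'^^j) a + (b - a))) ` Sigma P (\<lambda>(a,b). {..<R a b})"
  show ?thesis
  proof
    show "finite P'" unfolding P'_def using P(1) by (intro finite_imageI finite_SigmaI) auto
    show "a < b" if "(a,b) \<in> P'" for a b using that P(3) unfolding P'_def by auto
    have "y \<in> (\<Union>(a,b)\<in>P. \<Union>j<R a b. (T'^^j) ` {a..<b}) \<longleftrightarrow> y \<in> (\<Union>(a,b)\<in>P'. {a..<b})" for y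
    proof
      assume "y \<in> (\<Union>(a,b)\<in>P. \<Union>j<R a b. (T'^^j) ` {a..<b})"
      then obtain a b j where abj: "(a,b) \<in> P" "j < R a b" "y \<in> (T'^^j) ` {a..<b}" by blast
      have "((T'^^j) a, (T'^^j) a + (b - a)) \<in> P'"
        unfolding P'_def by (rule image_eqI[where x="((a,b),j)"]) (use abj in auto)
      moreover have "y \<in> {(T'^^j) a..<(T'^^j) a + (b - a)}"
        using interval[OF abj(1) less_imp_le[OF abj(2)]] abj(3) by simp
      ultimately show "y \<in> (\<Union>(a,b)\<in>P'. {a..<b})" by blast
    next
      assume "y \<in> (\<Union>(a,b)\<in>P'. {a..<b})"
      then obtain u v where "(u,v) \<in> P'" "y \<in> {u..<v}" by blast
      then obtain a b j where abj: "(a,b) \<in> P" "j < R a b" "y \<in> {(T'^^j) a..<(T'^^j) a + (b - a)}"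
        unfolding P'_def by auto
      then show "y \<in> (\<Union>(a,b)\<in>P. \<Union>j<R a b. (T'^^j) ` {a..<b})"
        using interval[OF abj(1) less_imp_le[OF abj(2)]] by blast
    qed
    then have "(\<Union>(a,b)\<in>P. \<Union>j<R a b. (T'^^j) ` {a..<b}) = (\<Union>(a,b)\<in>P'. {a..<b})"
      by (rule set_eqI)
    then show "hitting_set p q = (\<Union>(a,b)\<in>P'. {a..<b})" using hitting_set_tower[OF pq P(2) R] by simp
  qed
qed

theorem orbit_hits_interval:
  assumes x: "x \<in> {0..<L}" and pq: "0 \<le> p" "p < q" "q \<le> L"
  shows "\<exists>n. (T^^n) x \<in> {p..<q}"
proof -
  let ?Y = "hitting_set p q"
  obtain P where P: "finite P" "?Y = (\<Union>(a,b)\<in>P. {a..<b})" "\<And>a b. (a,b) \<in> P \<Longrightarrow> a < b"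
    using hitting_set_intervals[OF pq] by blast
  note inv = hitting_set_invariant[OF pq]
  have "p \<in> ?Y" unfolding hitting_set_def using pq by (auto intro!: exI[of _ 0])
  then have "P \<noteq> {}" using P(2) by auto
  then obtain s where s: "s \<in> left_ends ?Y" using left_ends_Union_nonempty[OF P(1) _ P(2,3)] by blast
  have "finite (left_ends ?Y)"
    using left_ends_Union_subset[OF P(2)] P(1) by (meson finite_imageI finite_subset)
  then have "s = 0" using invariant_left_end_zero inv s by blast
  then have "0 \<in> ?Y" using s unfolding left_ends_def by auto
  have "{0..<L} - ?Y = {}"
  proof (rule ccontr)
    assume ne: "{0..<L} - ?Y \<noteq> {}"
    obtain w where w: "w \<in> left_ends ({0..<L} - ?Y)"
      using left_ends_Diff_Union_nonempty[OF P(2) ne] by blast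
    have "finite (left_ends ({0..<L} - ?Y))"
      using left_ends_Diff_Union_subset[OF P(1,2)] P(1) by (meson finite_imageI finite_insert finite_subset)
    then have "w = 0" using invariant_left_end_zero F.invariant_Diff B.invariant_Diff inv w by blast
    then show False using w \<open>0 \<in> ?Y\<close> unfolding left_ends_def by auto
  qed
  then show ?thesis using x unfolding hitting_set_def by auto
qed

end

locale stacked_intervals =
  fixes A :: "'a set" and p :: "'a \<Rightarrow> nat" and lam :: "'a \<Rightarrow> real"
  assumes finite_A: "finite A" and bij: "bij_betw p A {1..card A}"
    and lam_pos: "\<And>a. a \<in> A \<Longrightarrow> lam a > 0"
begin

abbreviation off :: "'a \<Rightarrow> real" where "off \<equiv> offs A p lam"

lemma p_inj: "inj_on p A" using bij bij_betw_def by blast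

lemma p_range: "a \<in> A \<Longrightarrow> 1 \<le> p a \<and> p a \<le> card A" using bij by (auto simp: bij_betw_def)

lemma p_surj: "1 \<le> k \<Longrightarrow> k \<le> card A \<Longrightarrow> \<exists>a\<in>A. p a = k"
  using bij unfolding bij_betw_def by (metis atLeastAtMost_iff imageE)

lemma p_eq_iff: "a \<in> A \<Longrightarrow> b \<in> A \<Longrightarrow> p a = p b \<longleftrightarrow> a = b"
  using p_inj by (auto dest: inj_onD)

lemma off_nonneg: "0 \<le> off a"
  unfolding offs_def using lam_pos by (intro sum_nonneg) (simp add: less_imp_le)

lemma off_add_lam: "a \<in> A \<Longrightarrow> off a + lam a = sum lam (insert a {c\<in>A. p c < p a})"
  unfolding offs_def using finite_A by (subst sum.insert) auto

lemma off_add_lam_le_sum: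
  "a \<in> A \<Longrightarrow> insert a {c\<in>A. p c < p a} \<subseteq> B \<Longrightarrow> B \<subseteq> A \<Longrightarrow> off a + lam a \<le> sum lam B"
  unfolding off_add_lam using finite_A lam_pos
  by (intro sum_mono2) (auto intro: less_imp_le finite_subset)

lemma off_add_lam_le:
  assumes "a \<in> A" "b \<in> A" "p a < p b"
  shows "off a + lam a \<le> off b"
proof -
  have "insert a {c\<in>A. p c < p a} \<subseteq> {c\<in>A. p c < p b}" using assms by auto
  then show ?thesis using off_add_lam_le_sum[OF assms(1)] unfolding offs_def by auto
qed

lemma off_add_lam_le_total: "a \<in> A \<Longrightarrow> off a + lam a \<le> lstar A lam"
  using off_add_lam_le_sum[of a A] unfolding lstar_def by auto

lemma off_succ:
  assumes "a \<in> A" "b \<in> A" "p b = p a + 1"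
  shows "off b = off a + lam a"
proof -
  have "{c\<in>A. p c < p b} = insert a {c\<in>A. p c < p a}"
    using assms p_eq_iff by fastforce
  then show ?thesis using off_add_lam[OF assms(1)] unfolding offs_def by simp
qed

lemma off_last:
  assumes "a \<in> A" "p a = card A"
  shows "off a + lam a = lstar A lam"
proof -
  have "insert a {c\<in>A. p c < p a} = A"
    using assms p_eq_iff p_range by fastforce
  then show ?thesis using off_add_lam[OF assms(1)] unfolding lstar_def by simp
qed

lemma off_first: "a \<in> A \<Longrightarrow> p a = 1 \<Longrightarrow> off a = 0"
  using p_range unfolding offs_def by (metis (no_types, lifting) empty_Collect_eq not_less sum.empty)

lemma off_eq_0_iff:
  assumes "a \<in> A" shows "off a = 0 \<longleftrightarrow> p a = 1"
proof
  assume "off a = 0"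
  show "p a = 1"
  proof (rule ccontr)
    assume "p a \<noteq> 1"
    then obtain b where "b \<in> A" "p b = 1" "p b < p a" using p_surj[of 1] p_range[OF assms] by force
    then show False using off_add_lam_le[OF _ assms] lam_pos off_nonneg[of b] \<open>off a = 0\<close> by force
  qed
qed (use off_first assms in blast)

lemma off_less_total: "a \<in> A \<Longrightarrow> off a < lstar A lam"
  using off_add_lam_le_total lam_pos by force

lemma off_in: "a \<in> A \<Longrightarrow> off a \<in> {0..<lstar A lam}"
  using off_nonneg off_less_total by auto

lemma pieces_disjoint:
  assumes "a \<in> A" "b \<in> A" "a \<noteq> b"
  shows "off a + lam a \<le> off b \<or> off b + lam b \<le> off a"
  using assms p_eq_iff off_add_lam_le by (metis linorder_neqE_nat)

lemma off_inj: "a \<in> A \<Longrightarrow> b \<in> A \<Longrightarrow> off a = off b \<Longrightarrow> a = b"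
  using pieces_disjoint lam_pos by force

text \<open>The witness is the piece of largest index whose left end satisfies P.\<close>

lemma piece_crossing:
  assumes "P 0" "\<not> P (lstar A lam)"
  shows "\<exists>a\<in>A. P (off a) \<and> \<not> P (off a + lam a)"
proof -
  define B where "B = {a\<in>A. P (off a)}"
  have "A \<noteq> {}" using assms unfolding lstar_def by auto
  then have "1 \<le> card A" using finite_A by (simp add: Suc_leI card_gt_0_iff)
  then obtain a0 where "a0 \<in> A" "p a0 = 1" using p_surj[of 1] by auto
  then have "a0 \<in> B" using off_first assms(1) B_def by auto
  have fB: "finite B" using finite_A B_def by auto
  have "Max (p ` B) \<in> p ` B" using fB \<open>a0 \<in> B\<close> by (intro Max_in) auto
  then obtain a where a: "a \<in> B" "p a = Max (p ` B)" by auto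
  have amax: "\<And>b. b \<in> B \<Longrightarrow> p b \<le> p a" using a fB by auto
  have "\<not> P (off a + lam a)"
  proof
    assume H: "P (off a + lam a)"
    show False
    proof (cases "p a = card A")
      case True then show False using off_last[of a] a H B_def assms(2) by auto
    next
      case False
      then obtain b where b: "b \<in> A" "p b = p a + 1"
        using p_range[of a] a B_def p_surj[of "p a + 1"] by auto
      then have "b \<in> B" using off_succ a H B_def by auto
      then show False using amax b by fastforce
    qed
  qed
  then show ?thesis using a B_def by auto
qed

definition piece :: "real \<Rightarrow> 'a" where
  "piece x = (THE a. a \<in> A \<and> off a \<le> x \<and> x < off a + lam a)"

definition piece_left :: "real \<Rightarrow> 'a" where
  "piece_left x = (THE a. a \<in> A \<and> off a < x \<and> x \<le> off a + lam a)"

lemma piece_eqI: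
  assumes "a \<in> A" "off a \<le> x" "x < off a + lam a"
  shows "piece x = a"
  unfolding piece_def
proof (rule the_equality)
  fix b assume b: "b \<in> A \<and> off b \<le> x \<and> x < off b + lam b"
  show "b = a"
  proof (rule ccontr)
    assume "b \<noteq> a"
    then show False using pieces_disjoint[of a b] assms b by auto
  qed
qed (use assms in blast)

lemma piece_left_eqI:
  assumes "a \<in> A" "off a < x" "x \<le> off a + lam a"
  shows "piece_left x = a"
  unfolding piece_left_def
proof (rule the_equality)
  fix b assume b: "b \<in> A \<and> off b < x \<and> x \<le> off b + lam b"
  show "b = a"
  proof (rule ccontr)
    assume "b \<noteq> a"
    then show False using pieces_disjoint[of a b] assms b by auto
  qed
qed (use assms in blast)

lemma piece:
  assumes "0 \<le> x" "x < lstar A lam"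
  shows "piece x \<in> A" "off (piece x) \<le> x" "x < off (piece x) + lam (piece x)"
proof -
  obtain a where "a \<in> A" "off a \<le> x" "\<not> off a + lam a \<le> x"
    using piece_crossing[of "\<lambda>u. u \<le> x"] assms by auto
  then show "piece x \<in> A" "off (piece x) \<le> x" "x < off (piece x) + lam (piece x)"
    using piece_eqI[of a x] by auto
qed

lemma piece_left:
  assumes "0 < x" "x \<le> lstar A lam"
  shows "piece_left x \<in> A" "off (piece_left x) < x" "x \<le> off (piece_left x) + lam (piece_left x)"
proof -
  obtain a where "a \<in> A" "off a < x" "\<not> off a + lam a < x"
    using piece_crossing[of "\<lambda>u. u < x"] assms by auto
  then show "piece_left x \<in> A" "off (piece_left x) < x" "x \<le> off (piece_left x) + lam (piece_left x)"
    using piece_left_eqI[of a x] by auto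
qed

lemma inv_jmap:
  assumes "a \<in> A" "off a \<le> x" "x < off a + lam a"
  shows "inv_into (Idisj A lam) (jmap A p lam) x = (x - off a, a)"
proof (rule inv_into_f_eq)
  show "inj_on (jmap A p lam) (Idisj A lam)"
  proof (rule inj_onI)
    fix u v assume "u \<in> Idisj A lam" "v \<in> Idisj A lam" "jmap A p lam u = jmap A p lam v"
    then obtain y b z c where yz: "u = (y, b)" "v = (z, c)" "b \<in> A" "c \<in> A" "0 \<le> y" "y < lam b"
      "0 \<le> z" "z < lam c" "y + off b = z + off c"
      unfolding Idisj_def jmap_def by auto
    then have "b = c" using pieces_disjoint[of b c] by (cases "b = c") auto
    then show "u = v" using yz by simp
  qed
  show "(x - off a, a) \<in> Idisj A lam" using assms unfolding Idisj_def by auto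
qed (simp add: jmap_def)

lemma piece_extends:
  assumes "a \<in> A" "off a \<le> x" "x < off a + lam a" "x \<le> y" "y < lstar A lam"
    "\<forall>b\<in>A. \<not> (x < off b \<and> off b \<le> y)"
  shows "y < off a + lam a"
proof (rule ccontr)
  assume H: "\<not> y < off a + lam a"
  show False
  proof (cases "p a = card A")
    case True then show False using off_last[OF assms(1) True] assms(5) H by linarith
  next
    case False
    then obtain b where "b \<in> A" "p b = p a + 1" using p_range[OF assms(1)] p_surj[of "p a + 1"] by auto
    then show False using off_succ[OF assms(1)] assms(3,6) H by force
  qed
qed

end

locale interval_exchange =
  fixes A :: "'a set" and p0 p1 :: "'a \<Rightarrow> nat" and lam :: "'a \<Rightarrow> real"
  assumes data: "ie_data A p0 p1 lam"
begin

sublocale top: stacked_intervals A p0 lam using data unfolding ie_data_def by unfold_locales auto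
sublocale bot: stacked_intervals A p1 lam using data unfolding ie_data_def by unfold_locales auto

abbreviation L :: real where "L \<equiv> lstar A lam"
abbreviation T :: "real \<Rightarrow> real" where "T \<equiv> iet A p0 p1 lam"

definition shift :: "'a \<Rightarrow> real" where "shift a = bot.off a - top.off a"

text \<open>T_left is the left-continuous version of T: it translates the half-open interval
  (off a, off a + lam a] of the top row like T translates [off a, off a + lam a).\<close>

definition T_left :: "real \<Rightarrow> real" where "T_left y = y + shift (top.piece_left y)"

text \<open>The inverse of T is the exchange with the two orders swapped.\<close>

sublocale inv: interval_exchange A p1 p0 lam
  using data unfolding interval_exchange_def ie_data_def by auto

lemma inv_shift: "inv.shift a = - shift a"
  unfolding shift_def inv.shift_def by simp

lemma T_eq:
  assumes "a \<in> A" "top.off a \<le> x" "x < top.off a + lam a"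
  shows "T x = x + shift a"
  using top.inv_jmap[OF assms] unfolding iet_def shift_def by (simp add: jmap_def)

lemma T_in:
  assumes "x \<in> {0..<L}"
  shows "T x \<in> {0..<L}"
proof -
  let ?a = "top.piece x"
  have "?a \<in> A" "top.off ?a \<le> x" "x < top.off ?a + lam ?a" using top.piece assms by auto
  then show ?thesis
    using T_eq[of ?a x] bot.off_nonneg[of ?a] bot.off_add_lam_le_total[of ?a] unfolding shift_def by auto
qed

lemma T_off: "a \<in> A \<Longrightarrow> T (top.off a) = bot.off a"
  using T_eq[of a "top.off a"] top.lam_pos unfolding shift_def by auto

lemma T_translation:
  assumes "0 \<le> x" "x \<le> y" "y < L" "\<forall>s\<in>top.off ` A. \<not> (x < s \<and> s \<le> y)"
  shows "T y = T x + (y - x)"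
proof -
  let ?a = "top.piece x"
  have a: "?a \<in> A" "top.off ?a \<le> x" "x < top.off ?a + lam ?a" using top.piece assms by auto
  then have "y < top.off ?a + lam ?a" using top.piece_extends assms by blast
  then show ?thesis using T_eq[of ?a x] T_eq[of ?a y] a assms by simp
qed

lemma T_left_eq: "a \<in> A \<Longrightarrow> top.off a < y \<Longrightarrow> y \<le> top.off a + lam a \<Longrightarrow> T_left y = y + shift a"
  unfolding T_left_def using top.piece_left_eqI by simp

lemma T_left_in:
  assumes "0 < y" "y \<le> L"
  shows "0 < T_left y \<and> T_left y \<le> L"
proof -
  let ?a = "top.piece_left y"
  have "?a \<in> A" "top.off ?a < y" "y \<le> top.off ?a + lam ?a" using top.piece_left assms by auto
  then show ?thesis
    using T_left_eq[of ?a y] bot.off_nonneg[of ?a] bot.off_add_lam_le_total[of ?a]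
    unfolding shift_def by auto
qed

lemma T_left_eq_T:
  assumes "0 < y" "y < L" "y \<notin> top.off ` A"
  shows "T_left y = T y"
proof -
  let ?a = "top.piece y"
  have a: "?a \<in> A" "top.off ?a \<le> y" "y < top.off ?a + lam ?a" using top.piece assms by auto
  then have "top.off ?a < y" using assms(3) by (metis image_eqI order_le_less)
  then show ?thesis using T_left_eq[of ?a y] T_eq[of ?a y] a by simp
qed

end

text \<open>Facts proved in the locale reach the interpretation inv (as inv.T_eq, ...) only after
  the locale is re-entered; hence the repeated contexts below.\<close>

context interval_exchange
begin

lemma inv_T:
  assumes "x \<in> {0..<L}"
  shows "inv.T (T x) = x"
proof -
  let ?a = "top.piece x"
  have a: "?a \<in> A" "top.off ?a \<le> x" "x < top.off ?a + lam ?a" using top.piece assms by auto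
  then have "T x = x + shift ?a" using T_eq by blast
  moreover have "bot.off ?a \<le> x + shift ?a" "x + shift ?a < bot.off ?a + lam ?a" using a unfolding shift_def by auto
  ultimately show ?thesis using inv.T_eq[of ?a "x + shift ?a"] a inv_shift by simp
qed

lemma inj_on_T: "inj_on T {0..<L}"
  by (metis inj_onI inv_T)

lemma piecewise_translation: "A \<noteq> {} \<Longrightarrow> piecewise_translation T L (top.off ` A)"
proof
  assume "A \<noteq> {}"
  then show "0 < L" unfolding lstar_def using top.finite_A top.lam_pos by (intro sum_pos) auto
  have "1 \<le> card A" using \<open>A \<noteq> {}\<close> top.finite_A by (simp add: Suc_leI card_gt_0_iff)
  then obtain a where "a \<in> A" "p0 a = 1" using top.p_surj[of 1] by auto
  then show "0 \<in> top.off ` A" using top.off_first by force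
  show "T x \<in> {0..<L}" if "x \<in> {0..<L}" for x using T_in that .
  show "inj_on T {0..<L}" by (rule inj_on_T)
  show "finite (top.off ` A)" using top.finite_A by simp
  show "top.off ` A \<subseteq> {0..<L}" using top.off_in by auto
qed (use T_translation in blast)

lemma iter_in: "x \<in> {0..<L} \<Longrightarrow> (T^^n) x \<in> {0..<L}"
proof (induction n)
  case (Suc n) then show ?case using T_in[of "(T^^n) x"] by simp
qed simp

lemma inv_T_left:
  assumes "0 < y" "y \<le> L"
  shows "inv.T_left (T_left y) = y"
proof -
  let ?a = "top.piece_left y"
  have a: "?a \<in> A" "top.off ?a < y" "y \<le> top.off ?a + lam ?a" using top.piece_left assms by auto
  then have "T_left y = y + shift ?a" using T_left_eq by blast
  moreover have "bot.off ?a < y + shift ?a" "y + shift ?a \<le> bot.off ?a + lam ?a"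
    using a unfolding shift_def by auto
  ultimately show ?thesis using inv.T_left_eq[of ?a "y + shift ?a"] a inv_shift by simp
qed

end

context interval_exchange
begin

lemma inv_iter_T: "x \<in> {0..<L} \<Longrightarrow> (inv.T^^n) ((T^^n) x) = x"
proof (induction n arbitrary: x)
  case (Suc n)
  then show ?case using inv_T[OF iter_in[OF Suc.prems, of n]] by (simp add: funpow_swap1)
qed simp

lemma inj_on_iter: "inj_on (T^^n) {0..<L}"
  by (metis inj_onI inv_iter_T)

end

locale keane_iet = interval_exchange +
  assumes two_letters: "card A \<ge> 2" and admissible: "admissible A p0 p1"
    and keane: "keane A p0 p1 lam"
begin

lemma A_nonempty: "A \<noteq> {}" using two_letters by auto

lemma L_pos: "0 < L"
  using piecewise_translation.L_pos[OF piecewise_translation[OF A_nonempty]] .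

lemma first_letter: "\<exists>a\<in>A. p0 a = 1" "\<exists>a\<in>A. p1 a = 1"
  using top.p_surj bot.p_surj two_letters by auto

lemma first_letters_differ:
  assumes "a \<in> A" "p0 a = 1"
  shows "p1 a \<noteq> 1"
proof
  assume "p1 a = 1"
  have "{c\<in>A. p0 c \<in> {1..1}} = {a}" using assms top.p_inj unfolding inj_on_def by auto
  moreover have "{c\<in>A. p1 c \<in> {1..1}} = {a}" using assms \<open>p1 a = 1\<close> bot.p_inj unfolding inj_on_def by auto
  moreover have "(1::nat) \<le> 1" "1 < card A" using two_letters by auto
  ultimately show False using admissible unfolding admissible_def by blast
qed

lemma last_letters_differ:
  assumes "a \<in> A" "p0 a = card A"
  shows "p1 a \<noteq> card A"
proof
  assume "p1 a = card A"
  have "{c\<in>A. p0 c \<in> {1..card A - 1}} = A - {a}"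
  proof (rule set_eqI)
    fix c show "c \<in> {c\<in>A. p0 c \<in> {1..card A - 1}} \<longleftrightarrow> c \<in> A - {a}"
    proof (cases "c \<in> A")
      case True
      then have "p0 c = card A \<longleftrightarrow> c = a" using assms top.p_eq_iff by metis
      then show ?thesis using top.p_range[OF True] by auto
    qed auto
  qed
  moreover have "{c\<in>A. p1 c \<in> {1..card A - 1}} = A - {a}"
  proof (rule set_eqI)
    fix c show "c \<in> {c\<in>A. p1 c \<in> {1..card A - 1}} \<longleftrightarrow> c \<in> A - {a}"
    proof (cases "c \<in> A")
      case True
      then have "p1 c = card A \<longleftrightarrow> c = a" using assms \<open>p1 a = card A\<close> bot.p_eq_iff by metis
      then show ?thesis using bot.p_range[OF True] by auto
    qed auto
  qed
  moreover have "1 \<le> card A - 1" "card A - 1 < card A" using two_letters by auto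
  ultimately show False using admissible unfolding admissible_def by blast
qed

lemma no_connection:
  assumes "z \<in> top.off ` A" "s \<in> top.off ` A" "s \<noteq> 0" "1 \<le> m"
  shows "(T^^m) z \<noteq> s"
proof -
  obtain a b where ab: "a \<in> A" "z = top.off a" "b \<in> A" "s = top.off b" using assms by auto
  then have "p0 b > 1" using assms(3) top.off_eq_0_iff top.p_range by fastforce
  then show ?thesis using keane ab assms(4) unfolding keane_def jmap_def by auto
qed

lemma T_zero: "T 0 \<noteq> 0"
proof -
  obtain a where a: "a \<in> A" "p0 a = 1" using first_letter by blast
  then have "T 0 = bot.off a" using T_off top.off_first by metis
  then show ?thesis using first_letters_differ[OF a] bot.off_eq_0_iff a by simp
qed

lemma keane_translation: "keane_translation T inv.T L (top.off ` A) (bot.off ` A)"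
proof (rule keane_translation.intro[OF piecewise_translation inv.piecewise_translation],
    unfold_locales)
  show "inv.T (T x) = x" if "x \<in> {0..<L}" for x using inv_T that .
  show "T (inv.T x) = x" if "x \<in> {0..<L}" for x using inv.inv_T that .
  show "(T^^m) z \<noteq> s" if "z \<in> top.off ` A" "s \<in> top.off ` A" "s \<noteq> 0" "1 \<le> m" for z s m
    using no_connection that .
  show "bot.off ` A = T ` top.off ` A" using T_off by (auto simp: image_image)
qed (use T_zero A_nonempty in auto)

theorem orbit_hits_interval:
  "x \<in> {0..<L} \<Longrightarrow> 0 \<le> p \<Longrightarrow> p < q \<Longrightarrow> q \<le> L \<Longrightarrow> \<exists>n. (T^^n) x \<in> {p..<q}"
  using keane_translation.orbit_hits_interval[OF keane_translation] by blast

end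

lemma (in stacked_intervals) card_not_first:
  assumes "A \<noteq> {}"
  shows "card {a\<in>A. 1 < p a} = card A - 1"
proof -
  obtain a0 where a0: "a0 \<in> A" "p a0 = 1"
    using p_surj[of 1] assms finite_A by (auto simp: Suc_leI card_gt_0_iff)
  have "{a\<in>A. 1 < p a} = A - {a0}"
  proof (rule set_eqI)
    fix a show "a \<in> {a\<in>A. 1 < p a} \<longleftrightarrow> a \<in> A - {a0}"
    proof (cases "a \<in> A")
      case True
      then have "p a = 1 \<longleftrightarrow> a = a0" using a0 p_eq_iff by metis
      then show ?thesis using p_range[OF True] by auto
    qed auto
  qed
  then show ?thesis using a0 finite_A by simp
qed

context interval_exchange
begin

definition atoms :: "real set" where
  "atoms = (\<Union>n. D0 A p0 p1 lam n \<union> D1 A p0 p1 lam n)"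

abbreviation mu :: "real set \<Rightarrow> real" where "mu \<equiv> muS A p0 p1 lam"
abbreviation ip :: "real \<Rightarrow> real" where "ip \<equiv> iplus A p0 p1 lam"
abbreviation im :: "real \<Rightarrow> real" where "im \<equiv> iminus A p0 p1 lam"

lemma inv_into_T: "x \<in> {0..<L} \<Longrightarrow> inv_into {0..<L} T x = inv.T x"
  by (rule inv_into_f_eq[OF inj_on_T inv.T_in inv.inv_T])

lemma D0_eq: "D0 A p0 p1 lam n = (\<lambda>a. (inv.T^^n) (top.off a)) ` {a\<in>A. 1 < p0 a}"
proof -
  have "(inv_into {0..<L} T ^^ n) x = (inv.T^^n) x" if "x \<in> {0..<L}" for x
  proof (induction n)
    case (Suc n) then show ?case using inv_into_T[OF inv.iter_in[OF that, of n]] by simp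
  qed simp
  then have e: "(inv_into {0..<L} T ^^ n) (top.off a) = (inv.T^^n) (top.off a)" if "a \<in> A" for a
    using top.off_in that by blast
  show ?thesis unfolding D0_def Iint_def jmap_def by (auto simp: e image_iff) (metis e)
qed

lemma D1_eq: "D1 A p0 p1 lam n = (\<lambda>a. (T^^n) (bot.off a)) ` {a\<in>A. 1 < p1 a}"
  unfolding D1_def jmap_def by (auto simp: image_iff)

lemma finite_D0: "finite (D0 A p0 p1 lam n)"
  unfolding D0_eq using top.finite_A by simp

lemma D0_subset: "D0 A p0 p1 lam n \<subseteq> {0..<L}"
  unfolding D0_eq using inv.iter_in top.off_in by auto

lemma card_D0_le: "card (D0 A p0 p1 lam n) \<le> card A"
  unfolding D0_eq by (rule order_trans[OF card_image_le card_mono]) (use top.finite_A in auto)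

lemma card_D0: "A \<noteq> {} \<Longrightarrow> card (D0 A p0 p1 lam n) = card A - 1"
proof -
  assume "A \<noteq> {}"
  have "inj_on (\<lambda>a. (inv.T^^n) (top.off a)) {a\<in>A. 1 < p0 a}"
  proof (rule inj_onI)
    fix a b assume "a \<in> {a\<in>A. 1 < p0 a}" "b \<in> {a\<in>A. 1 < p0 a}"
      and "(inv.T^^n) (top.off a) = (inv.T^^n) (top.off b)"
    then show "a = b" using inj_onD[OF inv.inj_on_iter] top.off_in top.off_inj by blast
  qed
  then show ?thesis unfolding D0_eq using top.card_not_first[OF \<open>A \<noteq> {}\<close>] by (simp add: card_image)
qed

lemma top_off_atom:
  assumes "a \<in> A" "top.off a \<noteq> 0"
  shows "top.off a \<in> atoms"
proof -
  have "1 < p0 a" using assms top.off_first top.p_range by force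
  then have "top.off a \<in> D0 A p0 p1 lam 0" unfolding D0_eq using assms by auto
  then show ?thesis unfolding atoms_def by blast
qed

end

context interval_exchange
begin

lemma D0_swap: "D0 A p1 p0 lam = D1 A p0 p1 lam"
  using inv.D0_eq D1_eq by auto

lemma D1_swap: "D1 A p1 p0 lam = D0 A p0 p1 lam"
  using inv.D1_eq D0_eq by auto

lemma finite_D1: "finite (D1 A p0 p1 lam n)"
  using inv.finite_D0 unfolding D0_swap .

lemma D1_subset: "D1 A p0 p1 lam n \<subseteq> {0..<L}"
  using inv.D0_subset unfolding D0_swap .

lemma card_D1_le: "card (D1 A p0 p1 lam n) \<le> card A"
  using inv.card_D0_le unfolding D0_swap .

lemma card_D1: "A \<noteq> {} \<Longrightarrow> card (D1 A p0 p1 lam n) = card A - 1"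
  using inv.card_D0 unfolding D0_swap .

lemma mu_swap: "muS A p1 p0 lam = mu"
  unfolding muS_def D0_swap D1_swap by (simp add: add.commute)

lemma atoms_swap: "inv.atoms = atoms"
  unfolding atoms_def inv.atoms_def D0_swap D1_swap by auto

definition mu_term :: "real set \<Rightarrow> nat \<Rightarrow> real" where
  "mu_term S n = (1/2)^n * (real (card (D0 A p0 p1 lam n \<inter> S)) + real (card (D1 A p0 p1 lam n \<inter> S)))"

lemma mu_eq_suminf: "mu S = suminf (mu_term S)"
  unfolding muS_def mu_term_def ..

lemma mu_term_nonneg: "0 \<le> mu_term S n"
  unfolding mu_term_def by simp

lemma mu_term_le: "mu_term S n \<le> 2 * real (card A) * (1/2)^n"
proof -
  have "card (D0 A p0 p1 lam n \<inter> S) \<le> card A"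
    using card_D0_le card_mono[OF finite_D0, of "D0 A p0 p1 lam n \<inter> S" n] by (meson inf_le1 order_trans)
  moreover have "card (D1 A p0 p1 lam n \<inter> S) \<le> card A"
    using card_D1_le card_mono[OF finite_D1, of "D1 A p0 p1 lam n \<inter> S" n] by (meson inf_le1 order_trans)
  ultimately show ?thesis unfolding mu_term_def by (simp add: mult.commute mult_left_mono)
qed

lemma summable_mu_term: "summable (mu_term S)"
proof (rule summable_comparison_test)
  show "summable (\<lambda>n. 2 * real (card A) * (1/2::real)^n)"
    by (intro summable_mult summable_geometric) simp
qed (use mu_term_le mu_term_nonneg in auto)

lemma mu_nonneg: "0 \<le> mu S"
  unfolding mu_eq_suminf using summable_mu_term mu_term_nonneg by (rule suminf_nonneg)

lemma mu_mono: "S \<subseteq> S' \<Longrightarrow> mu S \<le> mu S'"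
  unfolding mu_eq_suminf
proof (rule suminf_le[OF _ summable_mu_term summable_mu_term])
  fix n assume "S \<subseteq> S'"
  then have "card (D0 A p0 p1 lam n \<inter> S) \<le> card (D0 A p0 p1 lam n \<inter> S')"
    "card (D1 A p0 p1 lam n \<inter> S) \<le> card (D1 A p0 p1 lam n \<inter> S')"
    using finite_D0 finite_D1 by (auto intro: card_mono)
  then show "mu_term S n \<le> mu_term S' n" unfolding mu_term_def by (intro mult_left_mono) auto
qed

lemma mu_Un: 
  assumes "S \<inter> S' = {}"
  shows "mu (S \<union> S') = mu S + mu S'"
proof -
  have "mu_term (S \<union> S') n = mu_term S n + mu_term S' n" for n
  proof -
    have "card (D0 A p0 p1 lam n \<inter> (S \<union> S')) = card (D0 A p0 p1 lam n \<inter> S) + card (D0 A p0 p1 lam n \<inter> S')"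
      "card (D1 A p0 p1 lam n \<inter> (S \<union> S')) = card (D1 A p0 p1 lam n \<inter> S) + card (D1 A p0 p1 lam n \<inter> S')"
      using assms finite_D0 finite_D1 by (auto simp: Int_Un_distrib intro!: card_Un_disjoint)
    then show ?thesis unfolding mu_term_def by (simp add: algebra_simps)
  qed
  then have "mu_term (S \<union> S') = (\<lambda>n. mu_term S n + mu_term S' n)" by (rule ext)
  then show ?thesis unfolding mu_eq_suminf
    by (simp add: suminf_add[OF summable_mu_term summable_mu_term])
qed

lemma mu_empty: "mu {} = 0"
  using mu_Un[of "{}" "{}"] by simp

lemma mu_singleton_pos: "y \<in> atoms \<Longrightarrow> 0 < mu {y}"
proof -
  assume "y \<in> atoms"
  then obtain n where "y \<in> D0 A p0 p1 lam n \<or> y \<in> D1 A p0 p1 lam n" unfolding atoms_def by auto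
  then have "0 < mu_term {y} n" unfolding mu_term_def by auto
  then show ?thesis unfolding mu_eq_suminf using suminf_pos2[OF summable_mu_term mu_term_nonneg] by blast
qed

lemma mu_singleton_zero: "y \<notin> atoms \<Longrightarrow> mu {y} = 0"
proof -
  assume "y \<notin> atoms"
  then have "mu_term {y} = (\<lambda>n. 0)" unfolding mu_term_def atoms_def by auto
  then show ?thesis unfolding mu_eq_suminf by simp
qed

lemma mu_tail:
  assumes "\<And>n. n < N \<Longrightarrow> S \<inter> (D0 A p0 p1 lam n \<union> D1 A p0 p1 lam n) = {}"
  shows "mu S \<le> 4 * real (card A) * (1/2)^N"
proof -
  have "mu_term S n = 0" if "n < N" for n
    using assms[OF that] unfolding mu_term_def by (simp add: Int_commute Int_Un_distrib)
  then have "(\<Sum>n<N. mu_term S n) = 0" by simp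
  then have "mu S = (\<Sum>n. mu_term S (n + N))"
    unfolding mu_eq_suminf using suminf_split_initial_segment[OF summable_mu_term, of S N] by simp
  also have "\<dots> \<le> (\<Sum>n. (2 * real (card A) * (1/2)^N) * (1/2)^n)"
  proof (rule suminf_le)
    show "mu_term S (n + N) \<le> 2 * real (card A) * (1/2)^N * (1/2)^n" for n
      using mu_term_le[of S "n + N"] by (simp add: power_add mult_ac)
    show "summable (\<lambda>n. mu_term S (n + N))" using summable_mu_term by (simp add: summable_iff_shift)
    show "summable (\<lambda>n. 2 * real (card A) * (1/2)^N * (1/2::real)^n)"
      by (intro summable_mult summable_geometric) simp
  qed
  also have "\<dots> = 4 * real (card A) * (1/2)^N"
    using suminf_mult[OF summable_geometric[of "1/2::real"]] suminf_geometric[of "1/2::real"] by simp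
  finally show ?thesis .
qed

lemma mu_small:
  assumes "\<epsilon> > 0"
  obtains F where "finite F" "\<And>S. S \<inter> F = {} \<Longrightarrow> mu S < \<epsilon>"
proof -
  have "(\<lambda>N. 4 * real (card A) * (1/2::real)^N) \<longlonglongrightarrow> 0"
    using tendsto_mult_right_zero[OF LIMSEQ_power_zero[of "1/2::real"]] by simp
  from LIMSEQ_D[OF this assms] obtain N where "norm (4 * real (card A) * (1/2::real)^N - 0) < \<epsilon>"
    by blast
  then have N: "4 * real (card A) * (1/2::real)^N < \<epsilon>" by simp
  show ?thesis
  proof
    show "finite (\<Union>n<N. D0 A p0 p1 lam n \<union> D1 A p0 p1 lam n)" using finite_D0 finite_D1 by auto
    show "mu S < \<epsilon>" if "S \<inter> (\<Union>n<N. D0 A p0 p1 lam n \<union> D1 A p0 p1 lam n) = {}" for S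
      using mu_tail[of N S] that N by fastforce
  qed
qed

lemma mu_total: "A \<noteq> {} \<Longrightarrow> mu {0..<L} = 4 * (real (card A) - 1)"
proof -
  assume "A \<noteq> {}"
  then have "1 \<le> card A" using top.finite_A by (simp add: Suc_leI card_gt_0_iff)
  have "mu_term {0..<L} n = (2 * (real (card A) - 1)) * (1/2)^n" for n
    unfolding mu_term_def Int_absorb2[OF D0_subset] Int_absorb2[OF D1_subset]
    using card_D0 card_D1 \<open>A \<noteq> {}\<close> \<open>1 \<le> card A\<close> by (simp add: of_nat_diff)
  then have "mu_term {0..<L} = (\<lambda>n. (2 * (real (card A) - 1)) * (1/2)^n)" by (rule ext)
  then show ?thesis unfolding mu_eq_suminf
    using suminf_mult[OF summable_geometric[of "1/2::real"]] suminf_geometric[of "1/2::real"] by simp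
qed

end

context interval_exchange
begin

lemma atoms_subset: "atoms \<subseteq> {0..<L}"
  unfolding atoms_def using D0_subset D1_subset by blast

lemma T_not_atom:
  assumes y: "y \<in> {0..<L}" "y \<notin> atoms" "y \<noteq> 0"
  shows "T y \<notin> atoms"
proof
  assume "T y \<in> atoms"
  then obtain n where "T y \<in> D0 A p0 p1 lam n \<or> T y \<in> D1 A p0 p1 lam n" unfolding atoms_def by auto
  then show False
  proof
    assume "T y \<in> D0 A p0 p1 lam n"
    then obtain a where a: "a \<in> A" "1 < p0 a" "T y = (inv.T^^n) (top.off a)" unfolding D0_eq by auto
    then have "y = (inv.T^^Suc n) (top.off a)" using inv_T[OF y(1)] by simp
    then have "y \<in> D0 A p0 p1 lam (Suc n)" unfolding D0_eq using a by auto
    then show False using y unfolding atoms_def by blast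
  next
    assume "T y \<in> D1 A p0 p1 lam n"
    then obtain a where a: "a \<in> A" "1 < p1 a" "T y = (T^^n) (bot.off a)" unfolding D1_eq by auto
    show False
    proof (cases n)
      case 0
      then have "T y = T (top.off a)" using a T_off by simp
      then have "y = top.off a" using inj_onD[OF inj_on_T] top.off_in[OF a(1)] y(1) by blast
      then show False using top_off_atom[OF a(1)] y by auto
    next
      case (Suc m)
      then have "T y = T ((T^^m) (bot.off a))" using a by simp
      then have "y = (T^^m) (bot.off a)"
        using inj_onD[OF inj_on_T] iter_in[OF bot.off_in[OF a(1)]] y(1) by blast
      then have "y \<in> D1 A p0 p1 lam m" unfolding D1_eq using a by auto
      then show False using y unfolding atoms_def by blast
    qed
  qed
qed

end

text \<open>Constructing K and the extension of T only needs that 0 is not an atom. Unlike the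
  Keane property, this hypothesis is symmetric under inverting T.\<close>

locale iet_doubling = interval_exchange +
  assumes nonempty: "A \<noteq> {}" and zero_not_atom: "0 \<notin> atoms"
begin

lemma inv_doubling: "iet_doubling A p1 p0 lam"
  using inv.interval_exchange_axioms nonempty zero_not_atom
  unfolding iet_doubling_def iet_doubling_axioms_def atoms_swap by blast

lemma L_pos: "0 < L"
  using piecewise_translation.L_pos[OF piecewise_translation[OF nonempty]] .

lemma L_not_atom: "L \<notin> atoms"
  using atoms_subset by auto

lemma im_eq: "y \<le> L \<Longrightarrow> im y = y + mu {0..<y}"
  unfolding iminus_def using mu_total[OF nonempty] by auto

lemma ip_eq_im:
  assumes "0 \<le> y" "y \<le> L"
  shows "ip y = im y + mu {y}"
proof -
  have "{0..y} = {0..<y} \<union> {y}" using assms(1) by auto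
  then show ?thesis unfolding iplus_def im_eq[OF assms(2)] using mu_Un[of "{0..<y}" "{y}"] by simp
qed

lemma ip_eq_im_not_atom: "0 \<le> y \<Longrightarrow> y \<le> L \<Longrightarrow> y \<notin> atoms \<Longrightarrow> ip y = im y"
  using ip_eq_im mu_singleton_zero by simp

lemma ip_eq_im_atom: "0 \<le> y \<Longrightarrow> y \<le> L \<Longrightarrow> y \<in> atoms \<Longrightarrow> ip y = im y + mu {y} \<and> 0 < mu {y}"
  using ip_eq_im mu_singleton_pos by simp

lemma im_zero: "im 0 = 0" and ip_zero: "ip 0 = 0" and ip_L: "ip L = im L"
  using im_eq[of 0] ip_eq_im_not_atom[of 0] ip_eq_im_not_atom[of L] L_pos mu_empty zero_not_atom L_not_atom
  by auto

lemma im_le_ip: "0 \<le> y \<Longrightarrow> y \<le> L \<Longrightarrow> im y \<le> ip y"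
  using ip_eq_im mu_nonneg by (metis le_add_same_cancel1)

lemma ip_add_le_im:
  assumes "y < y'" "y' \<le> L"
  shows "ip y + (y' - y) \<le> im y'"
proof -
  have "{0..y} \<subseteq> {0..<y'}" using assms(1) by auto
  then show ?thesis unfolding iplus_def im_eq[OF assms(2)] using mu_mono by fastforce
qed

lemma reps_gap:
  assumes "0 \<le> y" "y < y'" "y' \<le> L" "u \<in> {im y, ip y}" "v \<in> {im y', ip y'}"
  shows "u + (y' - y) \<le> v"
proof -
  have "u \<le> ip y" using assms im_le_ip[of y] by auto
  moreover have "im y' \<le> v" using assms im_le_ip[of y'] by auto
  ultimately show ?thesis using ip_add_le_im[OF assms(2,3)] by linarith
qed

lemma ip_strict_mono: "0 \<le> y \<Longrightarrow> y < y' \<Longrightarrow> y' \<le> L \<Longrightarrow> ip y < ip y'"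
  using reps_gap[of y y' "ip y" "ip y'"] by auto

lemma im_strict_mono: "0 \<le> y \<Longrightarrow> y < y' \<Longrightarrow> y' \<le> L \<Longrightarrow> im y < im y'"
  using reps_gap[of y y' "im y" "im y'"] by auto

lemma im_eq_ip_imp_eq:
  assumes "0 \<le> y" "y \<le> L" "0 \<le> z" "z \<le> L" "im y = ip z"
  shows "z = y"
  using reps_gap[of z y "ip z" "im y"] reps_gap[of y z "im y" "ip z"] assms
  by (cases z y rule: linorder_cases) auto

lemma ip_right_cont:
  assumes "0 \<le> z" "\<epsilon> > 0"
  obtains \<delta> where "\<delta> > 0" "\<And>z'. z < z' \<Longrightarrow> z' < z + \<delta> \<Longrightarrow> ip z' < ip z + \<epsilon>"
proof -
  obtain F where F: "finite F" "\<And>S. S \<inter> F = {} \<Longrightarrow> mu S < \<epsilon>/2" using mu_small[of "\<epsilon>/2"] assms by auto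
  obtain \<delta> where d: "\<delta> > 0" "\<forall>f\<in>F. f \<noteq> z \<longrightarrow> \<delta> \<le> dist z f" using finite_set_avoid[OF F(1)] by blast
  show ?thesis
  proof
    show "min \<delta> (\<epsilon>/2) > 0" using d assms by auto
    fix z' assume z': "z < z'" "z' < z + min \<delta> (\<epsilon>/2)"
    have "{z<..z'} \<inter> F = {}" using d z' by (force simp: dist_real_def)
    then have "mu {z<..z'} < \<epsilon>/2" using F by auto
    moreover have "{0..z'} = {0..z} \<union> {z<..z'}" "{0..z} \<inter> {z<..z'} = {}" using assms z' by auto
    ultimately show "ip z' < ip z + \<epsilon>" unfolding iplus_def using mu_Un z' by auto
  qed
qed

lemma im_left_cont:
  assumes "z \<le> L" "\<epsilon> > 0"
  obtains \<delta> where "\<delta> > 0" "\<And>z'. z - \<delta> < z' \<Longrightarrow> z' < z \<Longrightarrow> 0 \<le> z' \<Longrightarrow> im z - \<epsilon> < im z'"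
proof -
  obtain F where F: "finite F" "\<And>S. S \<inter> F = {} \<Longrightarrow> mu S < \<epsilon>/2" using mu_small[of "\<epsilon>/2"] assms by auto
  obtain \<delta> where d: "\<delta> > 0" "\<forall>f\<in>F. f \<noteq> z \<longrightarrow> \<delta> \<le> dist z f" using finite_set_avoid[OF F(1)] by blast
  show ?thesis
  proof
    show "min \<delta> (\<epsilon>/2) > 0" using d assms by auto
    fix z' assume z': "z - min \<delta> (\<epsilon>/2) < z'" "z' < z" "0 \<le> z'"
    have "{z'..<z} \<inter> F = {}" using d z' by (force simp: dist_real_def)
    then have "mu {z'..<z} < \<epsilon>/2" using F by auto
    moreover have "{0..<z} = {0..<z'} \<union> {z'..<z}" "{0..<z'} \<inter> {z'..<z} = {}" using z' by auto
    ultimately show "im z - \<epsilon> < im z'" using im_eq[OF assms(1)] im_eq[of z'] mu_Un z' assms(1) by auto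
  qed
qed

end

context interval_exchange
begin

lemma ip_swap: "iplus A p1 p0 lam = ip"
  unfolding iplus_def mu_swap ..

lemma im_swap: "iminus A p1 p0 lam = im"
  unfolding iminus_def mu_swap ..

lemma Kset_swap: "Kset A p1 p0 lam = Kset A p0 p1 lam"
  unfolding Kset_def ip_swap im_swap ..

end

context iet_doubling
begin

abbreviation K :: "real set" where "K \<equiv> Kset A p0 p1 lam"

lemma ip_in_K: "y \<in> {0..<L} \<Longrightarrow> ip y \<in> K"
  unfolding Kset_def Iint_def by auto

lemma im_in_K: "0 < y \<Longrightarrow> y \<le> L \<Longrightarrow> im y \<in> K"
  unfolding Kset_def Iint_def by (cases "y = L") auto

lemma K_cases:
  assumes "k \<in> K"
  obtains y where "y \<in> {0..<L}" "k = ip y" | y where "0 < y" "y \<le> L" "k = im y"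
proof -
  consider y where "y \<in> {0..<L}" "k = im y" | y where "y \<in> {0..<L}" "k = ip y" | "k = im L"
    using assms unfolding Kset_def Iint_def by auto
  then show ?thesis
  proof cases
    case (1 y)
    show ?thesis
    proof (cases "y = 0")
      case True then show ?thesis using that(1)[of 0] 1 im_zero ip_zero L_pos by auto
    next
      case False then show ?thesis using that(2)[of y] 1 by auto
    qed
  qed (use that L_pos in auto)
qed

lemma inj_on_ip: "inj_on ip {0..L}"
proof (rule inj_onI)
  fix x y assume "x \<in> {0..L}" "y \<in> {0..L}" "ip x = ip y"
  then show "x = y" using ip_strict_mono[of x y] ip_strict_mono[of y x] by (cases x y rule: linorder_cases) auto
qed

lemma inj_on_im: "inj_on im {0..L}"
proof (rule inj_onI)
  fix x y assume "x \<in> {0..L}" "y \<in> {0..L}" "im x = im y"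
  then show "x = y" using im_strict_mono[of x y] im_strict_mono[of y x] by (cases x y rule: linorder_cases) auto
qed

text \<open>Points of K that are not of the form ip y are im y with y an atom or y = L;
  there T_left takes over from T.\<close>

definition That :: "real \<Rightarrow> real" where
  "That k = (if k \<in> ip ` {0..<L} then ip (T (inv_into {0..<L} ip k))
    else im (T_left (inv_into {0<..L} im k)))"

lemma That_ip:
  assumes "y \<in> {0..<L}"
  shows "That (ip y) = ip (T y)"
proof -
  have "{0..<L} \<subseteq> {0..L}" by auto
  then have "inv_into {0..<L} ip (ip y) = y" using inv_into_f_f[OF inj_on_subset[OF inj_on_ip] assms] by blast
  then show ?thesis unfolding That_def using assms by auto
qed

lemma That_im:
  assumes y: "0 < y" "y \<le> L"
  shows "That (im y) = im (T_left y)"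
proof (cases "im y \<in> ip ` {0..<L}")
  case True
  then obtain z where z: "z \<in> {0..<L}" "im y = ip z" by auto
  then have zy: "z = y" using im_eq_ip_imp_eq[of y z] y by auto
  then have "y \<notin> atoms" using ip_eq_im_atom[of y] y z by auto
  then have "y \<notin> top.off ` A" "T y \<notin> atoms" using top_off_atom T_not_atom y z zy by auto
  moreover have "T y \<in> {0..<L}" using T_in z zy by simp
  ultimately have "T_left y = T y" "ip (T y) = im (T y)"
    using T_left_eq_T y z zy ip_eq_im_not_atom by auto
  then show ?thesis using That_ip z zy by simp
next
  case False
  have "{0<..L} \<subseteq> {0..L}" "y \<in> {0<..L}" using y by auto
  then have "inv_into {0<..L} im (im y) = y" using inv_into_f_f[OF inj_on_subset[OF inj_on_im]] by blast
  then show ?thesis unfolding That_def using False by simp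
qed

lemma shift_range:
  assumes "a \<in> A" "top.off a \<le> y" "y \<le> top.off a + lam a"
  shows "0 \<le> y + shift a" "y + shift a \<le> L"
  using assms bot.off_nonneg[of a] bot.off_add_lam_le_total[of a] unfolding shift_def by auto

lemma That_reps_piece:
  assumes "a \<in> A" "top.off a < y" "y < top.off a + lam a" "u \<in> {im y, ip y}"
  shows "That u \<in> {im (y + shift a), ip (y + shift a)}"
proof -
  have "y \<in> {0..<L}" "0 < y" using assms top.off_nonneg[of a] top.off_add_lam_le_total[of a] by auto
  then show ?thesis using assms That_ip T_eq That_im T_left_eq by auto
qed

lemma near_right:
  assumes "0 \<le> z" "z < z'" "z' \<le> L" "u \<in> {im z', ip z'}" "ip z' < ip z + \<epsilon>"
  shows "dist u (ip z) < \<epsilon>"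
proof -
  have "ip z + (z' - z) \<le> u" using reps_gap[OF assms(1-3), of "ip z" u] assms(4) by simp
  moreover have "u \<le> ip z'" using assms im_le_ip[of z'] by auto
  ultimately show ?thesis using assms unfolding dist_real_def by auto
qed

lemma near_left:
  assumes "0 \<le> z'" "z' < z" "z \<le> L" "u \<in> {im z', ip z'}" "im z - \<epsilon> < im z'"
  shows "dist u (im z) < \<epsilon>"
proof -
  have "u + (z - z') \<le> im z" using reps_gap[OF assms(1-3), of u "im z"] assms(4) by simp
  moreover have "im z' \<le> u" using assms im_le_ip[of z'] by auto
  ultimately show ?thesis using assms unfolding dist_real_def by auto
qed

lemma gap_below_ip:
  assumes y: "y \<in> {0..<L}" "y \<in> atoms \<or> y = 0"
  obtains g where "g > 0"
    "\<And>y' u. 0 \<le> y' \<Longrightarrow> y' \<le> y \<Longrightarrow> u \<in> {im y', ip y'} \<Longrightarrow> dist u (ip y) < g \<Longrightarrow> u = ip y"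
proof
  show "(if y \<in> atoms then mu {y} else 1) > 0" using mu_singleton_pos by auto
  fix y' u assume y': "0 \<le> y'" "y' \<le> y" "u \<in> {im y', ip y'}"
    and close: "dist u (ip y) < (if y \<in> atoms then mu {y} else 1)"
  show "u = ip y"
  proof (cases "y' < y")
    case True
    then have "y \<in> atoms" using y y' by auto
    then have "ip y = im y + mu {y}" using ip_eq_im_atom y by auto
    moreover have "u + (y - y') \<le> im y" using reps_gap[OF y'(1) True, of u "im y"] y y'(3) by auto
    ultimately show ?thesis using close True \<open>y \<in> atoms\<close> unfolding dist_real_def by auto
  next
    case False
    then have "y' = y" using y' by simp
    then show ?thesis using y'(3) close y ip_eq_im_atom[of y] im_zero ip_zero
      unfolding dist_real_def by (auto split: if_splits)
  qed
qed

lemma gap_above_im: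
  assumes y: "0 < y" "y \<le> L" "y < L \<Longrightarrow> y \<in> atoms"
  obtains g where "g > 0"
    "\<And>y' u. y \<le> y' \<Longrightarrow> y' \<le> L \<Longrightarrow> u \<in> {im y', ip y'} \<Longrightarrow> dist u (im y) < g \<Longrightarrow> u = im y"
proof
  show "(if y < L then mu {y} else 1) > 0" using mu_singleton_pos y by auto
  fix y' u assume y': "y \<le> y'" "y' \<le> L" "u \<in> {im y', ip y'}"
    and close: "dist u (im y) < (if y < L then mu {y} else 1)"
  show "u = im y"
  proof (cases "y < y'")
    case True
    then have "y < L" "y \<in> atoms" using y y' by auto
    then have "ip y = im y + mu {y}" using ip_eq_im_atom y by auto
    moreover have "ip y + (y' - y) \<le> u" using reps_gap[OF _ True y'(2), of "ip y" u] y y'(3) by auto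
    ultimately show ?thesis using close True \<open>y < L\<close> unfolding dist_real_def by auto
  next
    case False
    then have "y' = y" using y' by simp
    then show ?thesis using y'(3) close y ip_eq_im_atom[of y] ip_L
      unfolding dist_real_def by (auto split: if_splits)
  qed
qed

lemma K_reps:
  assumes "k \<in> K"
  obtains y where "0 \<le> y" "y \<le> L" "k \<in> {im y, ip y}"
proof (cases rule: K_cases[OF assms])
  case (1 y) then show ?thesis using that[of y] by auto
next
  case (2 y) then show ?thesis using that[of y] by auto
qed

lemma That_cont_right:
  assumes a: "a \<in> A" "top.off a \<le> y" "y < top.off a + lam a" and "\<epsilon> > 0"
  obtains d where "d > 0" "\<And>y' u. y < y' \<Longrightarrow> y' \<le> L \<Longrightarrow> u \<in> {im y', ip y'} \<Longrightarrow> dist u (ip y) < d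
    \<Longrightarrow> dist (That u) (ip (y + shift a)) < \<epsilon>"
proof -
  let ?t = "shift a"
  have yt: "0 \<le> y + ?t" using shift_range a by auto
  obtain \<delta> where \<delta>: "\<delta> > 0" "\<And>z'. y + ?t < z' \<Longrightarrow> z' < y + ?t + \<delta> \<Longrightarrow> ip z' < ip (y + ?t) + \<epsilon>"
    using ip_right_cont[OF yt \<open>\<epsilon> > 0\<close>] by blast
  have y0: "0 \<le> y" using a(2) top.off_nonneg[of a] by linarith
  show ?thesis
  proof
    show "min \<delta> (top.off a + lam a - y) > 0" using \<delta> a by auto
    fix y' u assume y': "y < y'" "y' \<le> L" "u \<in> {im y', ip y'}"
      and close: "dist u (ip y) < min \<delta> (top.off a + lam a - y)"
    have "ip y + (y' - y) \<le> u" using reps_gap[OF y0 y'(1,2), of "ip y" u] y'(3) by simp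
    then have "y' - y < min \<delta> (top.off a + lam a - y)" using close unfolding dist_real_def by auto
    then have y'r: "y' < top.off a + lam a" "y' + ?t < y + ?t + \<delta>" by auto
    have "That u \<in> {im (y' + ?t), ip (y' + ?t)}" using That_reps_piece[of a y' u] a y' y'r by auto
    moreover have "y' + ?t \<le> L" using shift_range[of a y'] a y' y'r by auto
    moreover have "ip (y' + ?t) < ip (y + ?t) + \<epsilon>" using \<delta>(2) y' y'r by auto
    moreover have "y + ?t < y' + ?t" using y'(1) by simp
    ultimately show "dist (That u) (ip (y + ?t)) < \<epsilon>" using near_right[OF yt] by blast
  qed
qed

lemma That_cont_left:
  assumes a: "a \<in> A" "top.off a < y" "y \<le> top.off a + lam a" and v: "v \<in> {im y, ip y}"
    and "\<epsilon> > 0"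
  obtains d where "d > 0" "\<And>y' u. 0 \<le> y' \<Longrightarrow> y' < y \<Longrightarrow> u \<in> {im y', ip y'} \<Longrightarrow> dist u v < d
    \<Longrightarrow> dist (That u) (im (y + shift a)) < \<epsilon>"
proof -
  let ?t = "shift a"
  have yt: "y + ?t \<le> L" using shift_range a by auto
  obtain \<delta> where \<delta>: "\<delta> > 0"
    "\<And>z'. y + ?t - \<delta> < z' \<Longrightarrow> z' < y + ?t \<Longrightarrow> 0 \<le> z' \<Longrightarrow> im (y + ?t) - \<epsilon> < im z'"
    using im_left_cont[OF yt \<open>\<epsilon> > 0\<close>] by blast
  have yL: "y \<le> L" using a(3) top.off_add_lam_le_total[OF a(1)] by linarith
  show ?thesis
  proof
    show "min \<delta> (y - top.off a) > 0" using \<delta> a by auto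
    fix y' u assume y': "0 \<le> y'" "y' < y" "u \<in> {im y', ip y'}"
      and close: "dist u v < min \<delta> (y - top.off a)"
    have "u + (y - y') \<le> v" using reps_gap[OF y'(1,2) yL] y'(3) v by simp
    then have "y - y' < min \<delta> (y - top.off a)" using close unfolding dist_real_def by auto
    then have y'l: "top.off a < y'" "y + ?t - \<delta> < y' + ?t" by auto
    have "That u \<in> {im (y' + ?t), ip (y' + ?t)}" using That_reps_piece[of a y' u] a y' y'l by auto
    moreover have "0 \<le> y' + ?t" using shift_range[of a y'] a y' y'l by auto
    moreover have "im (y + ?t) - \<epsilon> < im (y' + ?t)" using \<delta>(2) y' y'l \<open>0 \<le> y' + ?t\<close> by auto
    moreover have "y' + ?t < y + ?t" using y'(2) by simp
    ultimately show "dist (That u) (im (y + ?t)) < \<epsilon>" using near_left[OF _ _ yt] by blast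
  qed
qed

text \<open>Below ip y the space K has a gap when y is an atom (or y = 0); otherwise y is
  interior to its piece and T y is not an atom, so the left limit of That is im (T y) = ip (T y).\<close>

lemma That_cont_below_ip:
  assumes y: "y \<in> {0..<L}" and "\<epsilon> > 0"
  obtains d where "d > 0" "\<And>y' u. 0 \<le> y' \<Longrightarrow> y' \<le> y \<Longrightarrow> u \<in> {im y', ip y'} \<Longrightarrow>
    dist u (ip y) < d \<Longrightarrow> dist (That u) (That (ip y)) < \<epsilon>"
proof -
  define a where "a = top.piece y"
  have a: "a \<in> A" "top.off a \<le> y" "y < top.off a + lam a" using top.piece y unfolding a_def by auto
  let ?t = "shift a"
  have Thy: "That (ip y) = ip (y + ?t)" using That_ip[OF y] T_eq[OF a] by simp
  show ?thesis
  proof (cases "y \<in> atoms \<or> y = 0")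
    case True
    obtain g where g: "g > 0" "\<And>y' u. 0 \<le> y' \<Longrightarrow> y' \<le> y \<Longrightarrow> u \<in> {im y', ip y'} \<Longrightarrow>
        dist u (ip y) < g \<Longrightarrow> u = ip y"
      using gap_below_ip[OF y True] by blast
    show ?thesis
    proof (rule that[of g])
      fix y' u assume "0 \<le> y'" "y' \<le> y" "u \<in> {im y', ip y'}" "dist u (ip y) < g"
      then have "u = ip y" by (rule g(2))
      then show "dist (That u) (That (ip y)) < \<epsilon>" using \<open>\<epsilon> > 0\<close> by simp
    qed (rule g(1))
  next
    case False
    have "top.off a \<noteq> y" using top_off_atom[OF a(1)] False by auto
    then have ly: "top.off a < y" using a(2) by simp
    have "y + ?t \<notin> atoms" using T_not_atom[of y] y False T_eq[OF a] by simp
    then have ipt: "ip (y + ?t) = im (y + ?t)" using ip_eq_im_not_atom shift_range a by simp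
    have ipy: "im y = ip y" using ip_eq_im_not_atom[of y] y False by simp
    obtain d where d: "d > 0" "\<And>y' u. 0 \<le> y' \<Longrightarrow> y' < y \<Longrightarrow> u \<in> {im y', ip y'} \<Longrightarrow>
        dist u (ip y) < d \<Longrightarrow> dist (That u) (im (y + ?t)) < \<epsilon>"
      using That_cont_left[OF a(1) ly _ _ \<open>\<epsilon> > 0\<close>, of "ip y"] a by auto
    show ?thesis
    proof (rule that[of d])
      fix y' u assume y': "0 \<le> y'" "y' \<le> y" "u \<in> {im y', ip y'}" and close: "dist u (ip y) < d"
      show "dist (That u) (That (ip y)) < \<epsilon>"
      proof (cases "y' < y")
        case True then show ?thesis using d(2)[OF y'(1) True y'(3) close] ipt Thy by simp
      next
        case False
        then have "u = ip y" using y' ipy by auto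
        then show ?thesis using \<open>\<epsilon> > 0\<close> by simp
      qed
    qed (rule d(1))
  qed
qed

lemma That_cont_ip:
  assumes y: "y \<in> {0..<L}" and "\<epsilon> > 0"
  obtains d where "d > 0" "\<And>k. k \<in> K \<Longrightarrow> dist k (ip y) < d \<Longrightarrow> dist (That k) (That (ip y)) < \<epsilon>"
proof -
  define a where "a = top.piece y"
  have a: "a \<in> A" "top.off a \<le> y" "y < top.off a + lam a" using top.piece y unfolding a_def by auto
  have Thy: "That (ip y) = ip (y + shift a)" using That_ip[OF y] T_eq[OF a] by simp
  obtain dr where dr: "dr > 0" "\<And>y' u. y < y' \<Longrightarrow> y' \<le> L \<Longrightarrow> u \<in> {im y', ip y'} \<Longrightarrow>
      dist u (ip y) < dr \<Longrightarrow> dist (That u) (ip (y + shift a)) < \<epsilon>"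
    using That_cont_right[OF a \<open>\<epsilon> > 0\<close>] by blast
  obtain dl where dl: "dl > 0" "\<And>y' u. 0 \<le> y' \<Longrightarrow> y' \<le> y \<Longrightarrow> u \<in> {im y', ip y'} \<Longrightarrow>
      dist u (ip y) < dl \<Longrightarrow> dist (That u) (That (ip y)) < \<epsilon>"
    using That_cont_below_ip[OF y \<open>\<epsilon> > 0\<close>] by blast
  show ?thesis
  proof
    show "min dr dl > 0" using dr dl by simp
    fix k assume "k \<in> K" and close: "dist k (ip y) < min dr dl"
    obtain y' where y': "0 \<le> y'" "y' \<le> L" "k \<in> {im y', ip y'}" using K_reps[OF \<open>k \<in> K\<close>] by blast
    show "dist (That k) (That (ip y)) < \<epsilon>"
    proof (cases "y < y'")
      case True then show ?thesis using y' close dr Thy by auto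
    next
      case False then show ?thesis using y' close dl by auto
    qed
  qed
qed

text \<open>A point im y outside ip ` [0, L) has y = L or y an atom, hence a gap above it.\<close>

lemma That_cont_im:
  assumes y: "0 < y" "y \<le> L" "im y \<notin> ip ` {0..<L}" and "\<epsilon> > 0"
  obtains d where "d > 0" "\<And>k. k \<in> K \<Longrightarrow> dist k (im y) < d \<Longrightarrow> dist (That k) (That (im y)) < \<epsilon>"
proof -
  have atom: "y \<in> atoms" if "y < L"
  proof (rule ccontr)
    assume "y \<notin> atoms"
    then have "im y = ip y" using ip_eq_im_not_atom y by simp
    then show False using y that by auto
  qed
  define a where "a = top.piece_left y"
  have a: "a \<in> A" "top.off a < y" "y \<le> top.off a + lam a" using top.piece_left y unfolding a_def by auto
  let ?t = "shift a"
  have Thy: "That (im y) = im (y + ?t)" using That_im[OF y(1,2)] T_left_eq[OF a] by simp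
  obtain dl where dl: "dl > 0" "\<And>y' u. 0 \<le> y' \<Longrightarrow> y' < y \<Longrightarrow> u \<in> {im y', ip y'} \<Longrightarrow>
      dist u (im y) < dl \<Longrightarrow> dist (That u) (im (y + ?t)) < \<epsilon>"
    using That_cont_left[OF a, of "im y" \<epsilon>] \<open>\<epsilon> > 0\<close> by auto
  obtain g where g: "g > 0" "\<And>y' u. y \<le> y' \<Longrightarrow> y' \<le> L \<Longrightarrow> u \<in> {im y', ip y'} \<Longrightarrow>
      dist u (im y) < g \<Longrightarrow> u = im y"
    using gap_above_im[OF y(1,2) atom] by blast
  show ?thesis
  proof
    show "min dl g > 0" using dl g by simp
    fix k assume "k \<in> K" and close: "dist k (im y) < min dl g"
    obtain y' where y': "0 \<le> y'" "y' \<le> L" "k \<in> {im y', ip y'}" using K_reps[OF \<open>k \<in> K\<close>] by blast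
    show "dist (That k) (That (im y)) < \<epsilon>"
    proof (cases "y \<le> y'")
      case True
      then have "k = im y" using g(2)[OF True y'(2,3)] close by auto
      then show ?thesis using \<open>\<epsilon> > 0\<close> by simp
    next
      case False then show ?thesis using y' close dl Thy by auto
    qed
  qed
qed

theorem That_continuous: "continuous_on K That"
  unfolding continuous_on_iff
proof (intro ballI allI impI)
  fix k and \<epsilon> :: real assume "k \<in> K" "\<epsilon> > 0"
  show "\<exists>d>0. \<forall>k'\<in>K. dist k' k < d \<longrightarrow> dist (That k') (That k) < \<epsilon>"
  proof (cases "k \<in> ip ` {0..<L}")
    case True
    then obtain y where "y \<in> {0..<L}" "k = ip y" by auto
    then show ?thesis using That_cont_ip[OF _ \<open>\<epsilon> > 0\<close>, of y] by metis
  next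
    case False
    then obtain y where "0 < y" "y \<le> L" "k = im y" using K_cases[OF \<open>k \<in> K\<close>] by blast
    then show ?thesis using That_cont_im[OF _ _ _ \<open>\<epsilon> > 0\<close>, of y] False by metis
  qed
qed

lemma That_into: "That ` K \<subseteq> K"
proof
  fix k' assume "k' \<in> That ` K"
  then obtain k where k: "k \<in> K" "k' = That k" by auto
  show "k' \<in> K"
  proof (cases rule: K_cases[OF k(1)])
    case (1 y) then show ?thesis using k That_ip ip_in_K T_in by simp
  next
    case (2 y) then show ?thesis using k That_im im_in_K T_left_in by simp
  qed
qed

abbreviation That_inv :: "real \<Rightarrow> real" where "That_inv \<equiv> iet_doubling.That A p1 p0 lam"

lemma That_inv_ip: "y \<in> {0..<L} \<Longrightarrow> That_inv (ip y) = ip (inv.T y)"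
  using iet_doubling.That_ip[OF inv_doubling] unfolding ip_swap .

lemma That_inv_im: "0 < y \<Longrightarrow> y \<le> L \<Longrightarrow> That_inv (im y) = im (inv.T_left y)"
  using iet_doubling.That_im[OF inv_doubling] unfolding im_swap .

theorem That_homeomorphism: "homeomorphism K K That That_inv"
proof (rule homeomorphismI)
  show "continuous_on K That_inv"
    using iet_doubling.That_continuous[OF inv_doubling] unfolding Kset_swap .
  show "That_inv ` K \<subseteq> K"
    using iet_doubling.That_into[OF inv_doubling] unfolding Kset_swap .
  show "That_inv (That k) = k" if "k \<in> K" for k
  proof (cases rule: K_cases[OF that])
    case (1 y) then show ?thesis using That_ip T_in That_inv_ip inv_T by simp
  next
    case (2 y) then show ?thesis using That_im T_left_in That_inv_im inv_T_left by simp
  qed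
  show "That (That_inv k) = k" if "k \<in> K" for k
  proof (cases rule: K_cases[OF that])
    case (1 y) then show ?thesis using That_inv_ip inv.T_in That_ip inv.inv_T by simp
  next
    case (2 y) then show ?thesis using That_inv_im inv.T_left_in That_im inv.inv_T_left by simp
  qed
qed (rule That_continuous That_into)+

lemma K_subset_closure: "K \<subseteq> closure (ip ` {0..<L})"
proof
  fix k assume "k \<in> K"
  then show "k \<in> closure (ip ` {0..<L})"
  proof (cases rule: K_cases)
    case (2 y)
    show ?thesis unfolding closure_approachable
    proof (intro allI impI)
      fix \<epsilon> :: real assume "\<epsilon> > 0"
      obtain \<delta> where \<delta>: "\<delta> > 0" "\<And>z. y - \<delta> < z \<Longrightarrow> z < y \<Longrightarrow> 0 \<le> z \<Longrightarrow> im y - \<epsilon> < im z"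
        using im_left_cont[OF 2(2) \<open>\<epsilon> > 0\<close>] by blast
      define z where "z = max (y / 2) (y - \<delta> / 2)"
      have z: "y - \<delta> < z" "z < y" "0 \<le> z" unfolding z_def using 2 \<delta> by auto
      have "im y - \<epsilon> < ip z" using \<delta>(2)[OF z] im_le_ip[of z] z 2 by fastforce
      moreover have "ip z \<le> im y" using ip_add_le_im[OF z(2) 2(2)] z by auto
      ultimately have "dist (ip z) k < \<epsilon>" using 2 unfolding dist_real_def by auto
      moreover have "ip z \<in> ip ` {0..<L}" using z 2 by auto
      ultimately show "\<exists>x\<in>ip ` {0..<L}. dist x k < \<epsilon>" by blast
    qed
  qed (auto intro: closure_subset[THEN subsetD])
qed

theorem That_unique:
  assumes "continuous_on K Th'" "\<forall>x\<in>{0..<L}. Th' (ip x) = ip (T x)" "k \<in> K"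
  shows "Th' k = That k"
proof -
  have "closedin (top_of_set K) {k\<in>K. Th' k - That k = 0}"
    by (intro continuous_closedin_preimage_constant continuous_on_diff assms(1) That_continuous)
  then obtain C where C: "closed C" "{k\<in>K. Th' k - That k = 0} = K \<inter> C"
    unfolding closedin_closed by blast
  have "ip ` {0..<L} \<subseteq> C" using C(2) assms(2) That_ip ip_in_K by auto
  then have "closure (ip ` {0..<L}) \<subseteq> C" using C(1) by (rule closure_minimal)
  then have "k \<in> {k\<in>K. Th' k - That k = 0}" using C(2) K_subset_closure assms(3) by blast
  then show ?thesis by simp
qed

end

context keane_iet
begin

text \<open>An atom at 0 would give a cut connection: either T^n 0 is a nonzero top cut, or T^n
  maps a top cut to the top cut that T sends to 0.\<close>

lemma zero_not_atom: "0 \<notin> atoms"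
proof
  assume "0 \<in> atoms"
  then obtain n where "0 \<in> D0 A p0 p1 lam n \<or> 0 \<in> D1 A p0 p1 lam n" unfolding atoms_def by auto
  then show False
  proof
    assume "0 \<in> D0 A p0 p1 lam n"
    then obtain a where a: "a \<in> A" "1 < p0 a" "(inv.T^^n) (top.off a) = 0" unfolding D0_eq by auto
    then have "(T^^n) 0 = top.off a" using inv.inv_iter_T[OF top.off_in[OF a(1)], of n] by simp
    moreover have "top.off a \<noteq> 0" using a top.off_eq_0_iff by simp
    ultimately show False
      using no_connection[of 0 "top.off a" n] a(1) first_letter(1) top.off_first by (cases n) force+
  next
    assume "0 \<in> D1 A p0 p1 lam n"
    then obtain a where a: "a \<in> A" "1 < p1 a" "(T^^n) (bot.off a) = 0" unfolding D1_eq by auto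
    obtain c where c: "c \<in> A" "p1 c = 1" using first_letter by blast
    have "T ((T^^n) (top.off a)) = T (top.off c)"
      using a T_off bot.off_first[OF c] c by (simp add: funpow_swap1)
    then have ac: "(T^^n) (top.off a) = top.off c"
      using inj_onD[OF inj_on_T] iter_in top.off_in a(1) c(1) by blast
    have "top.off c \<noteq> 0" using first_letters_differ[of c] c top.off_eq_0_iff by auto
    show False
    proof (cases n)
      case 0 then show False using top.off_inj[OF a(1) c(1)] ac a(2) c(2) by simp
    next
      case (Suc m) then show False using no_connection[of "top.off a" "top.off c" n] ac a c \<open>top.off c \<noteq> 0\<close> by auto
    qed
  qed
qed

end

sublocale keane_iet \<subseteq> iet_doubling
  using A_nonempty zero_not_atom by unfold_locales

context keane_iet
begin

lemma T_left_top_end: "a \<in> A \<Longrightarrow> T_left (top.off a + lam a) = bot.off a + lam a"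
  using T_left_eq[of a "top.off a + lam a"] top.lam_pos unfolding shift_def by auto

lemma bot_end_cases:
  assumes "a \<in> A"
  shows "bot.off a + lam a = L \<or> bot.off a + lam a \<in> bot.off ` A - {0}"
proof (cases "p1 a = card A")
  case False
  then obtain b where b: "b \<in> A" "p1 b = p1 a + 1" using bot.p_range[OF assms] bot.p_surj[of "p1 a + 1"] by auto
  then have "bot.off b = bot.off a + lam a" using bot.off_succ[OF assms] by blast
  moreover have "bot.off b \<noteq> 0" using bot.off_eq_0_iff[OF b(1)] b bot.p_range[OF assms] by simp
  ultimately show ?thesis using b by force
qed (use bot.off_last[OF assms] in simp)

lemma top_cut_end:
  assumes "v \<in> top.off ` A" "v \<noteq> 0"
  obtains a where "a \<in> A" "v = top.off a + lam a"
proof -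
  obtain b where b: "b \<in> A" "v = top.off b" using assms by auto
  then have "1 < p0 b" using assms top.off_first top.p_range by force
  then obtain a where "a \<in> A" "p0 b = p0 a + 1" using top.p_surj[of "p0 b - 1"] top.p_range[OF b(1)] by force
  then show ?thesis using that top.off_succ b by metis
qed

lemma T_left_L: "T_left L \<in> bot.off ` A - {0}"
proof -
  obtain a where a: "a \<in> A" "p0 a = card A" using top.p_surj[of "card A"] two_letters by auto
  have TL: "T_left L = bot.off a + lam a" using T_left_top_end[OF a(1)] top.off_last[OF a] by simp
  obtain b where b: "b \<in> A" "p1 b = p1 a + 1"
    using last_letters_differ[OF a] bot.p_range[OF a(1)] bot.p_surj[of "p1 a + 1"] by force
  then have "bot.off a + lam a \<noteq> L" using bot.off_succ[OF a(1)] bot.off_less_total[OF b(1)] by simp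
  then show ?thesis using TL bot_end_cases[OF a(1)] by auto
qed

lemma T_orbit_bot_cut:
  assumes "w \<in> bot.off ` A - {0}"
  shows "(T^^m) w \<notin> top.off ` A"
proof
  assume hit: "(T^^m) w \<in> top.off ` A"
  obtain b where b: "b \<in> A" "w = bot.off b" using assms by auto
  then have e: "(T^^m) w = (T^^Suc m) (top.off b)" using T_off by (simp add: funpow_swap1)
  show False
  proof (cases "(T^^m) w = 0")
    case False then show False using no_connection[OF imageI[OF b(1)] hit False, of "Suc m"] e by simp
  next
    case True
    obtain c where c: "c \<in> A" "p1 c = 1" using first_letter by blast
    have c0: "top.off c \<noteq> 0" using first_letters_differ[of c] c top.off_eq_0_iff by auto
    have "T ((T^^m) (top.off b)) = T (top.off c)" using True e T_off[OF c(1)] bot.off_first[OF c] by simp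
    then have ec: "(T^^m) (top.off b) = top.off c"
      using inj_onD[OF inj_on_T _ iter_in[OF top.off_in[OF b(1)]] top.off_in[OF c(1)]] by blast
    show False
    proof (cases m)
      case 0 then have "b = c" using ec top.off_inj b c by simp
      then show False using b c assms bot.off_first[OF c] by simp
    next
      case (Suc k)
      then have "1 \<le> m" by simp
      then show False using no_connection[OF imageI[OF b(1)] imageI[OF c(1)] c0] ec by simp
    qed
  qed
qed

lemma T_left_orbit_bot_cut:
  assumes "w \<in> bot.off ` A - {0}"
  shows "(T_left^^m) w = (T^^m) w"
proof (induction m)
  case (Suc m)
  have "(T^^m) w \<in> {0..<L}" using iter_in bot.off_in assms by auto
  moreover have "(T^^m) w \<notin> top.off ` A" using T_orbit_bot_cut[OF assms] .
  moreover have "0 \<in> top.off ` A" using first_letter(1) top.off_first by force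
  ultimately have "0 < (T^^m) w" "(T^^m) w < L" "(T^^m) w \<notin> top.off ` A"
    by (auto simp: order_le_less)
  then have "T_left ((T^^m) w) = T ((T^^m) w)" by (rule T_left_eq_T)
  then show ?case using Suc by simp
qed simp

lemma T_left_iter_range: "0 < y \<Longrightarrow> y \<le> L \<Longrightarrow> 0 < (T_left^^n) y \<and> (T_left^^n) y \<le> L"
  by (induction n) (simp_all add: T_left_in)

text \<open>Once the T_left-orbit has passed a top cut or L, it sits on a nonzero bottom cut,
  from where it never meets a top cut again and hence follows T.\<close>

lemma T_left_orbit_settles:
  assumes y: "0 < y" "y \<le> L"
  obtains N where "(T_left^^N) y \<in> {0..<L}" "\<And>m. (T_left^^(m + N)) y = (T^^m) ((T_left^^N) y)"
proof (cases "\<exists>n. (T_left^^n) y \<in> top.off ` A \<union> {L}")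
  case False
  have "(T_left^^m) y = (T^^m) y" for m
  proof (induction m)
    case (Suc m)
    have "(T_left^^m) y \<notin> top.off ` A" "(T_left^^m) y \<noteq> L" using False by blast+
    then have "T_left ((T_left^^m) y) = T ((T_left^^m) y)"
      using T_left_eq_T T_left_iter_range[OF y, of m] by auto
    then show ?case using Suc by simp
  qed simp
  moreover have "y \<noteq> L" using False by (metis UnI2 funpow_0 singletonI)
  then have "y \<in> {0..<L}" using y by auto
  ultimately show ?thesis using that[of 0] by simp
next
  case True
  then obtain n where n: "(T_left^^n) y \<in> top.off ` A \<union> {L}" by blast
  have bot_cut: "\<exists>N. (T_left^^N) y \<in> bot.off ` A - {0}"
  proof (cases "(T_left^^n) y = L")
    case True then show ?thesis using T_left_L by (metis funpow.simps(2) comp_apply)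
  next
    case False
    then have "(T_left^^n) y \<in> top.off ` A" "(T_left^^n) y \<noteq> 0" using n T_left_iter_range[OF y, of n] by auto
    then obtain a where a: "a \<in> A" "(T_left^^n) y = top.off a + lam a" by (rule top_cut_end)
    then have "(T_left^^Suc n) y = bot.off a + lam a" using T_left_top_end by simp
    then show ?thesis using bot_end_cases[OF a(1)] T_left_L
      by (metis funpow.simps(2) comp_apply)
  qed
  then obtain N where N: "(T_left^^N) y \<in> bot.off ` A - {0}" by blast
  then show ?thesis using that[of N] bot.off_in T_left_orbit_bot_cut[OF N] by (auto simp: funpow_add)
qed

lemma T_left_orbit_hits_interval:
  assumes "0 < y" "y \<le> L" "0 \<le> p" "p < q" "q \<le> L"
  shows "\<exists>n. (T_left^^n) y \<in> {p..<q}"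
proof -
  obtain N where N: "(T_left^^N) y \<in> {0..<L}" "\<And>m. (T_left^^(m + N)) y = (T^^m) ((T_left^^N) y)"
    using T_left_orbit_settles assms(1,2) by blast
  obtain m where "(T^^m) ((T_left^^N) y) \<in> {p..<q}" using orbit_hits_interval[OF N(1) assms(3-5)] by blast
  then show ?thesis using N(2) by metis
qed

lemma That_iter_ip: "y \<in> {0..<L} \<Longrightarrow> (That^^n) (ip y) = ip ((T^^n) y)"
proof (induction n)
  case (Suc n) then show ?case using That_ip[OF iter_in[OF Suc.prems, of n]] by simp
qed simp

lemma That_iter_im: "0 < y \<Longrightarrow> y \<le> L \<Longrightarrow> (That^^n) (im y) = im ((T_left^^n) y)"
  by (induction n) (simp_all add: That_im T_left_iter_range)

text \<open>ip z is approached from the right and im z from the left.\<close>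

lemma reps_approach:
  assumes reps: "\<And>n. u n \<in> {im (f n), ip (f n)}"
    and dense: "\<And>p q. 0 \<le> p \<Longrightarrow> p < q \<Longrightarrow> q \<le> L \<Longrightarrow> \<exists>n. f n \<in> {p..<q}"
    and "k \<in> K" "\<epsilon> > 0"
  shows "\<exists>n. dist (u n) k < \<epsilon>"
  using \<open>k \<in> K\<close>
proof (cases rule: K_cases)
  case (1 z)
  obtain \<delta> where \<delta>: "\<delta> > 0" "\<And>z'. z < z' \<Longrightarrow> z' < z + \<delta> \<Longrightarrow> ip z' < ip z + \<epsilon>"
    using ip_right_cont[of z \<epsilon>] 1 \<open>\<epsilon> > 0\<close> by auto
  define q where "q = min (z + \<delta>) L"
  have zq: "z < q" "q \<le> L" unfolding q_def using 1 \<delta> by auto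
  obtain n where n: "f n \<in> {(z + q) / 2..<q}" using dense[of "(z + q) / 2" q] zq 1 by auto
  have "z < f n" "f n < z + \<delta>" "f n \<le> L" using n zq unfolding q_def by auto
  then have "dist (u n) (ip z) < \<epsilon>" using near_right[of z "f n" "u n" \<epsilon>] 1 reps[of n] \<delta>(2) by auto
  then show ?thesis using 1 by auto
next
  case (2 z)
  obtain \<delta> where \<delta>: "\<delta> > 0" "\<And>z'. z - \<delta> < z' \<Longrightarrow> z' < z \<Longrightarrow> 0 \<le> z' \<Longrightarrow> im z - \<epsilon> < im z'"
    using im_left_cont[OF 2(2) \<open>\<epsilon> > 0\<close>] by auto
  define p where "p = max 0 (z - \<delta> / 2)"
  have pz: "0 \<le> p" "p < z" "z - \<delta> < p" unfolding p_def using 2 \<delta> by auto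
  obtain n where n: "f n \<in> {p..<z}" using dense[of p z] pz 2 by auto
  then have "dist (u n) (im z) < \<epsilon>" using near_left[of "f n" z "u n" \<epsilon>] 2 pz reps[of n] \<delta>(2) by auto
  then show ?thesis using 2 by auto
qed

lemma That_orbit_approach:
  assumes "c \<in> K" "k \<in> K" "\<epsilon> > 0"
  shows "\<exists>n. dist ((That^^n) c) k < \<epsilon>"
  using \<open>c \<in> K\<close>
proof (cases rule: K_cases)
  case (1 y)
  show ?thesis
  proof (rule reps_approach[OF _ _ assms(2,3)])
    show "(That^^n) c \<in> {im ((T^^n) y), ip ((T^^n) y)}" for n using That_iter_ip 1 by simp
    show "\<exists>n. (T^^n) y \<in> {p..<q}" if "0 \<le> p" "p < q" "q \<le> L" for p q
      using orbit_hits_interval[OF 1(1) that] .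
  qed
next
  case (2 y)
  show ?thesis
  proof (rule reps_approach[OF _ _ assms(2,3)])
    show "(That^^n) c \<in> {im ((T_left^^n) y), ip ((T_left^^n) y)}" for n using That_iter_im 2 by simp
    show "\<exists>n. (T_left^^n) y \<in> {p..<q}" if "0 \<le> p" "p < q" "q \<le> L" for p q
      using T_left_orbit_hits_interval[OF 2(1,2) that] .
  qed
qed

theorem That_minimal: "minimal_on K That"
  unfolding minimal_on_def
proof (intro allI impI)
  fix C assume "C \<subseteq> K \<and> closedin (top_of_set K) C \<and> C \<noteq> {} \<and> That ` C \<subseteq> C"
  then have CK: "C \<subseteq> K" and cl: "closedin (top_of_set K) C" and "C \<noteq> {}" and inv: "That ` C \<subseteq> C"
    by auto
  obtain c where c: "c \<in> C" using \<open>C \<noteq> {}\<close> by auto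
  have orb: "(That^^n) c \<in> C" for n by (induction n) (use c inv in auto)
  obtain S where S: "closed S" "C = K \<inter> S" using cl unfolding closedin_closed by auto
  have "k \<in> closure C" if "k \<in> K" for k
    unfolding closure_approachable using That_orbit_approach[of c k] c CK that orb by blast
  then have "K \<subseteq> S" using closure_minimal[of C S] S by auto
  then show "C = K" using S by auto
qed

theorem extension:
  "\<exists>Th. continuous_on K Th \<and> Th ` K \<subseteq> K \<and> (\<forall>x\<in>Iint A lam. Th (ip x) = ip (T x))
    \<and> (\<forall>Th'. continuous_on K Th' \<and> Th' ` K \<subseteq> K \<and> (\<forall>x\<in>Iint A lam. Th' (ip x) = ip (T x))
          \<longrightarrow> (\<forall>y\<in>K. Th' y = Th y))
    \<and> (\<exists>g. homeomorphism K K Th g) \<and> minimal_on K Th"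
  using That_continuous That_into That_ip That_unique That_homeomorphism That_minimal
  unfolding Iint_def by blast

end

theorem mainTheorem5:
  fixes A :: "'a set" and p0 p1 :: "'a \<Rightarrow> nat" and lam :: "'a \<Rightarrow> real"
  assumes "ie_data A p0 p1 lam"
    and "card A \<ge> 2"
    and "admissible A p0 p1"
    and "keane A p0 p1 lam"
  shows "\<exists>Th. continuous_on (Kset A p0 p1 lam) Th
            \<and> Th ` Kset A p0 p1 lam \<subseteq> Kset A p0 p1 lam
            \<and> (\<forall>x\<in>Iint A lam. Th (iplus A p0 p1 lam x) = iplus A p0 p1 lam (iet A p0 p1 lam x))
            \<and> (\<forall>Th'. continuous_on (Kset A p0 p1 lam) Th'
                  \<and> Th' ` Kset A p0 p1 lam \<subseteq> Kset A p0 p1 lam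
                  \<and> (\<forall>x\<in>Iint A lam. Th' (iplus A p0 p1 lam x) = iplus A p0 p1 lam (iet A p0 p1 lam x))
                  \<longrightarrow> (\<forall>y\<in>Kset A p0 p1 lam. Th' y = Th y))
            \<and> (\<exists>g. homeomorphism (Kset A p0 p1 lam) (Kset A p0 p1 lam) Th g)
            \<and> minimal_on (Kset A p0 p1 lam) Th"
proof -
  interpret keane_iet A p0 p1 lam
    using assms by (simp add: keane_iet_def keane_iet_axioms_def interval_exchange_def)
  show ?thesis by (rule extension)
qed

end
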